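(* Fix an integer $s\ge 2$. For each $n$, let $G_n$ be a graph with $n$ vertices and $m_n$ edges, and let $\mathbf{c}_n(s)=(c_{1,n},\ldots,c_{s,n})$ be a composition of $n$ into $s$ positive parts ($\sum_i c_{i,n}=n$). Color $G_n$ by a uniformly random $\mathbf{c}_n(s)$-coloring, and let $M_i(G_n)$ be the number of edges both of whose ends receive color $i$, $M(G_n)=\sum_{i=1}^s M_i(G_n)$ and $L(G_n)=m_n-M(G_n)$. Let $\hat c_n=\min_{i\in[s]}c_{i,n}$, $\zeta_n=\sqrt{\Sigma_2(G_n)}/m_n$, $\boldsymbol{\upsilon}_s=s^{-1}\mathbf{1}_s$, and $$\boldsymbol{M}(G_n)=(M_1(G_n),\ldots,M_s(G_n)),\qquad \overline{\boldsymbol{M}}(G_n)=(\mathbb{E}[M_1(G_n)],\ldots,\mathbb{E}[M_s(G_n)]).$$ Assume $\liminf_n \hat c_n/n>0$ and $m_n\to\infty$. Then: (i) If $\zeta_n=o(1)$, then $\boldsymbol{M}(G_n)=(1+o_P(1))\boldsymbol{I}_s\overline{\boldsymbol{M}}(G_n)$, where $o_P(1)$ denotes a random variable converging to $0$ in probability and $\boldsymbol{I}_s$ is the $s\times s$ identity matrix (i.e. $M_i(G_n)/\mathbb{E}[M_i(G_n)]\to 1$ in probability for every $i$); in particular $L(G_n)$ and $M(G_n)$ concentrate in probability around their expected values (i.e. $L(G_n)/\mathbb{E}[L(G_n)]\to1$ and $M(G_n)/\mathbb{E}[M(G_n)]\to 1$ in probability). (ii) Suppose $\zeta_n=\Theta(1)$.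 If $\liminf_{n\to\infty}\|n^{-1}\mathbf{c}_n(s)-\boldsymbol{\upsilon}_s\|>0$, then $$\liminf_{n\to\infty}\Pr\big(|M(G_n)-\mathbb{E}[M(G_n)]|>0\big)>0\quad\text{and}\quad \liminf_{n\to\infty}\Pr\big(|L(G_n)-\mathbb{E}[L(G_n)]|>0\big)>0;$$ if instead $\|n^{-1}\mathbf{c}_n(s)-\boldsymbol{\upsilon}_s\|\to 0$, then both $L(G_n)$ and $M(G_n)$ concentrate in probability around their expected values, regardless of $\zeta_n$.
   Context: A $\mathbf{c}$-coloring of an $n$-vertex graph $G$, for a composition $\mathbf{c}=(c_1,\ldots,c_s)$ of $n$, is a surjective map $f:V(G)\to[s]$ with $|f^{-1}(i)|=c_i$ for all $i$; the set of all such colorings carries the uniform probability measure (each coloring has probability $c_1!\cdots c_s!/n!$). $\Sigma_2(G)$ denotes the sum of the squares of the vertex degrees of $G$. $\|\cdot\|$ is the Euclidean norm. $\zeta_n=\Theta(1)$ means $\zeta_n$ is bounded above and below by positive constants for all large $n$. *)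

theory Defs
  imports "HOL-Probability.Probability"
begin

definition simple_graph :: "nat \<Rightarrow> nat set set \<Rightarrow> bool" where
  "simple_graph n E \<longleftrightarrow> E \<subseteq> {{u, v} | u v. u < n \<and> v < n \<and> u \<noteq> v}"

definition degree :: "nat set set \<Rightarrow> nat \<Rightarrow> nat" where
  "degree E v = card {e \<in> E. v \<in> e}"

definition Sigma2 :: "nat \<Rightarrow> nat set set \<Rightarrow> real" where
  "Sigma2 n E = (\<Sum>v<n. real (degree E v) ^ 2)"

definition zeta :: "nat \<Rightarrow> nat set set \<Rightarrow> real" where
  "zeta n E = sqrt (Sigma2 n E) / real (card E)"

definition composition :: "nat \<Rightarrow> nat \<Rightarrow> (nat \<Rightarrow> nat) \<Rightarrow> bool" where
  "composition s n c \<longleftrightarrow> (\<forall>i<s. 0 < c i) \<and> (\<Sum>i<s. c i) = n"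

text \<open>c-colorings of the vertex set {0..<n} with colors {0..<s}
  (colour classes have prescribed sizes; surjectivity follows from positivity of the parts).\<close>
definition colorings :: "nat \<Rightarrow> nat \<Rightarrow> (nat \<Rightarrow> nat) \<Rightarrow> (nat \<Rightarrow> nat) set" where
  "colorings s n c = {f \<in> {..<n} \<rightarrow>\<^sub>E {..<s}. \<forall>i<s. card {v \<in> {..<n}. f v = i} = c i}"

definition coloring_pmf :: "nat \<Rightarrow> nat \<Rightarrow> (nat \<Rightarrow> nat) \<Rightarrow> (nat \<Rightarrow> nat) pmf" where
  "coloring_pmf s n c = pmf_of_set (colorings s n c)"

definition Mi :: "nat set set \<Rightarrow> nat \<Rightarrow> (nat \<Rightarrow> nat) \<Rightarrow> real" where
  "Mi E i f = real (card {e \<in> E. \<forall>v\<in>e. f v = i})"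

definition Mtot :: "nat \<Rightarrow> nat set set \<Rightarrow> (nat \<Rightarrow> nat) \<Rightarrow> real" where
  "Mtot s E f = (\<Sum>i<s. Mi E i f)"

definition Ltot :: "nat \<Rightarrow> nat set set \<Rightarrow> (nat \<Rightarrow> nat) \<Rightarrow> real" where
  "Ltot s E f = real (card E) - Mtot s E f"

definition concentrates :: "(nat \<Rightarrow> 'a pmf) \<Rightarrow> (nat \<Rightarrow> 'a \<Rightarrow> real) \<Rightarrow> bool" where
  "concentrates P X \<longleftrightarrow> (\<forall>\<epsilon>>0. (\<lambda>n. measure_pmf.prob (P n)
      {f. \<bar>X n f / measure_pmf.expectation (P n) (X n) - 1\<bar> > \<epsilon>}) \<longlonglongrightarrow> 0)"

end

theory Submission
  imports Defs "HOL-Real_Asymp.Real_Asymp"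
begin

(*
  M(G) is a sum of edge indicators. Vertex colours are exchangeable under a uniform colouring,
  so the moments of these indicators follow by double counting over tuples of distinct
  vertices: disjoint edges are almost uncorrelated, and adjacent edges have covariance at most
  1, or at most sum c_i^3/(n)_3 - (E[M]/m)^2, which is small when the composition is nearly
  uniform. Hence Var M <= m + g Sigma_2(G) + o(m^2) with g = 1, resp. g = o(1), while E M_i,
  E M and E L are of order m once all classes have linear size, and Chebyshev's inequality
  gives concentration when zeta_n -> 0, resp. when the composition is nearly uniform.

  For anti-concentration, a vertex h of maximal degree has degree of order m when zeta_n is
  bounded below, and an unbalanced composition has two colours i, j whose classes differ by
  order n. The numbers of neighbours of h coloured j and i concentrate around their means,
  which differ by order m; so with probability bounded below h is coloured i and has many
  more neighbours coloured j than i. Swapping the colours of h and of a low-degree vertex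
  coloured j then changes M, and since the swap preserves the uniform distribution, M differs
  from any given constant with probability bounded below.
*)

section \<open>Indicator sums\<close>

text \<open>An indicator that, unlike of_bool, is not split by the simplifier, so that sums of
  products of indicators keep their shape.\<close>
definition ind :: "bool \<Rightarrow> real" where "ind b = of_bool b"

lemma ind_simps [simp]: "ind True = 1" "ind False = 0"
  by (auto simp: ind_def)

lemma ind_nonneg [simp]: "0 \<le> ind b" and ind_le_one [simp]: "ind b \<le> 1"
  by (auto simp: ind_def)

lemma ind_conj: "ind a * ind b = ind (a \<and> b)"
  by (auto simp: ind_def)

lemma ind_mult_le: "0 \<le> y \<Longrightarrow> ind P * y \<le> y"
  by (cases P) auto

lemma sum_ind_card: "finite A \<Longrightarrow> (\<Sum>x\<in>A. ind (P x)) = real (card {x\<in>A. P x})"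
  by (simp add: ind_def Collect_conj_eq)

lemma sum_ind_neq_mult:
  fixes g :: "'a \<Rightarrow> real"
  assumes "finite A" "u \<in> A"
  shows "(\<Sum>v\<in>A. ind (v \<noteq> u) * g v) = (\<Sum>v\<in>A. g v) - g u"
proof -
  have "(\<Sum>v\<in>A. ind (v \<noteq> u) * g v) = (\<Sum>v\<in>A - {u}. g v)"
    by (rule sum.mono_neutral_cong_right) (use assms in \<open>auto simp: ind_def\<close>)
  also have "\<dots> = (\<Sum>v\<in>A. g v) - g u"
    using assms by (simp add: sum_diff1)
  finally show ?thesis .
qed

lemma length_le_if_distinct_below:
  "distinct xs \<Longrightarrow> set xs \<subseteq> {..<n} \<Longrightarrow> length xs \<le> n"
  using card_mono[of "{..<n}" "set xs"] by (simp add: distinct_card)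

lemma sum_ind_distinct_snoc:
  assumes "set xs \<subseteq> {..<n}"
  shows "(\<Sum>x<n. ind (distinct (xs @ [x]))) = ind (distinct xs) * (real n - real (length xs))"
proof (cases "distinct xs")
  case True
  have "length xs \<le> n"
    using length_le_if_distinct_below[OF True assms] .
  moreover have "{x \<in> {..<n}. distinct (xs @ [x])} = {..<n} - set xs"
    using True by auto
  ultimately show ?thesis
    using True assms by (simp add: sum_ind_card card_Diff_subset distinct_card of_nat_diff)
qed (simp add: ind_def)

lemma sum_ind_distinct2: "(\<Sum>u<n. \<Sum>v<n. ind (distinct [u,v])) = real n * (real n - 1)"
proof -
  have "(\<Sum>v<n. ind (distinct [u,v])) = real n - 1" if "u < n" for u
    using sum_ind_distinct_snoc[of "[u]" n] that by simp
  then show ?thesis by simp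
qed

lemma sum_ind_distinct3:
  "(\<Sum>u<n. \<Sum>v<n. \<Sum>w<n. ind (distinct [u,v,w])) = real n * (real n - 1) * (real n - 2)"
proof -
  have "(\<Sum>w<n. ind (distinct [u,v,w])) = ind (distinct [u,v]) * (real n - 2)"
    if "u < n" "v < n" for u v
    using sum_ind_distinct_snoc[of "[u,v]" n] that by simp
  then have "(\<Sum>u<n. \<Sum>v<n. \<Sum>w<n. ind (distinct [u,v,w]))
      = (\<Sum>u<n. \<Sum>v<n. ind (distinct [u,v])) * (real n - 2)"
    by (simp add: sum_distrib_right)
  then show ?thesis by (simp only: sum_ind_distinct2)
qed

lemma sum_ind_distinct4:
  "(\<Sum>u<n. \<Sum>v<n. \<Sum>w<n. \<Sum>x<n. ind (distinct [u,v,w,x]))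
    = real n * (real n - 1) * (real n - 2) * (real n - 3)"
proof -
  have "(\<Sum>x<n. ind (distinct [u,v,w,x])) = ind (distinct [u,v,w]) * (real n - 3)"
    if "u < n" "v < n" "w < n" for u v w
    using sum_ind_distinct_snoc[of "[u,v,w]" n] that by simp
  then have "(\<Sum>u<n. \<Sum>v<n. \<Sum>w<n. \<Sum>x<n. ind (distinct [u,v,w,x]))
      = (\<Sum>u<n. \<Sum>v<n. \<Sum>w<n. ind (distinct [u,v,w])) * (real n - 3)"
    by (simp add: sum_distrib_right)
  then show ?thesis by (simp only: sum_ind_distinct3)
qed

lemma sum_swap3:
  "(\<Sum>u\<in>A. \<Sum>v\<in>A. \<Sum>w\<in>A. \<Sum>f\<in>B. g u v w f)
    = (\<Sum>f\<in>B. \<Sum>u\<in>A. \<Sum>v\<in>A. \<Sum>w\<in>A. g u v w f)"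
  by (subst sum.swap, subst (2) sum.swap, subst (3) sum.swap) (rule refl)

lemma sum_swap4:
  "(\<Sum>u\<in>A. \<Sum>v\<in>A. \<Sum>w\<in>A. \<Sum>x\<in>A. \<Sum>f\<in>B. g u v w x f)
    = (\<Sum>f\<in>B. \<Sum>u\<in>A. \<Sum>v\<in>A. \<Sum>w\<in>A. \<Sum>x\<in>A. g u v w x f)"
  by (subst sum_swap3[symmetric]) (simp only: sum.swap[of _ B])

lemma sum_product3:
  fixes a b d :: "'a \<Rightarrow> real"
  shows "(\<Sum>u\<in>A. \<Sum>v\<in>A. \<Sum>w\<in>A. a u * b v * d w) = sum a A * sum b A * sum d A"
proof -
  have "(\<Sum>u\<in>A. \<Sum>v\<in>A. \<Sum>w\<in>A. a u * b v * d w) = (\<Sum>u\<in>A. \<Sum>v\<in>A. (a u * b v) * sum d A)"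
    by (intro sum.cong refl) (rule sum_distrib_left[symmetric])
  also have "\<dots> = (\<Sum>u\<in>A. (\<Sum>v\<in>A. a u * b v) * sum d A)"
    by (intro sum.cong refl) (rule sum_distrib_right[symmetric])
  also have "\<dots> = (\<Sum>u\<in>A. (a u * sum b A) * sum d A)"
    by (intro sum.cong refl) (simp only: sum_distrib_left)
  also have "\<dots> = sum a A * sum b A * sum d A"
    by (simp only: sum_distrib_right)
  finally show ?thesis .
qed

lemma sum_product22:
  fixes g h :: "'a \<Rightarrow> 'a \<Rightarrow> real"
  shows "(\<Sum>u\<in>A. \<Sum>v\<in>A. \<Sum>w\<in>A. \<Sum>x\<in>A. g u v * h w x)
    = (\<Sum>u\<in>A. \<Sum>v\<in>A. g u v) * (\<Sum>w\<in>A. \<Sum>x\<in>A. h w x)"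
proof -
  let ?H = "\<Sum>w\<in>A. \<Sum>x\<in>A. h w x"
  have "(\<Sum>u\<in>A. \<Sum>v\<in>A. \<Sum>w\<in>A. \<Sum>x\<in>A. g u v * h w x)
      = (\<Sum>u\<in>A. \<Sum>v\<in>A. \<Sum>w\<in>A. g u v * (\<Sum>x\<in>A. h w x))"
    by (intro sum.cong refl) (rule sum_distrib_left[symmetric])
  also have "\<dots> = (\<Sum>u\<in>A. \<Sum>v\<in>A. g u v * ?H)"
    by (intro sum.cong refl) (rule sum_distrib_left[symmetric])
  also have "\<dots> = (\<Sum>u\<in>A. (\<Sum>v\<in>A. g u v) * ?H)"
    by (intro sum.cong refl) (rule sum_distrib_right[symmetric])
  also have "\<dots> = (\<Sum>u\<in>A. \<Sum>v\<in>A. g u v) * ?H"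
    by (rule sum_distrib_right[symmetric])
  finally show ?thesis .
qed

section \<open>Averages and covariances over a finite set\<close>

definition avg :: "'f set \<Rightarrow> ('f \<Rightarrow> real) \<Rightarrow> real" where
  "avg Sp X = (\<Sum>f\<in>Sp. X f) / real (card Sp)"

definition cov :: "'f set \<Rightarrow> ('f \<Rightarrow> real) \<Rightarrow> ('f \<Rightarrow> real) \<Rightarrow> real" where
  "cov Sp X Y = avg Sp (\<lambda>f. X f * Y f) - avg Sp X * avg Sp Y"

lemma avg_sum: "finite I \<Longrightarrow> avg Sp (\<lambda>f. \<Sum>x\<in>I. Y x f) = (\<Sum>x\<in>I. avg Sp (Y x))"
  unfolding avg_def by (simp only: sum.swap[of _ Sp] sum_divide_distrib)

lemma avg_ind: "avg A (\<lambda>f. ind (P f)) = real (card {f \<in> A. P f}) / real (card A)"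
  unfolding avg_def by (cases "finite A") (simp_all add: sum_ind_card)

lemma sum_centered_product:
  assumes "finite Sp" "Sp \<noteq> {}"
  shows "(\<Sum>f\<in>Sp. (X f - avg Sp X) * (Y f - avg Sp Y)) = real (card Sp) * cov Sp X Y"
proof -
  let ?N = "real (card Sp)"
  have "?N > 0" using assms by (simp add: card_gt_0_iff)
  then have sums: "(\<Sum>f\<in>Sp. X f) = ?N * avg Sp X" "(\<Sum>f\<in>Sp. Y f) = ?N * avg Sp Y"
      "(\<Sum>f\<in>Sp. X f * Y f) = ?N * avg Sp (\<lambda>f. X f * Y f)"
    by (simp_all add: avg_def)
  have "(X f - avg Sp X) * (Y f - avg Sp Y)
      = X f * Y f - avg Sp Y * X f - avg Sp X * Y f + avg Sp X * avg Sp Y" for f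
    by (simp add: algebra_simps)
  then have "(\<Sum>f\<in>Sp. (X f - avg Sp X) * (Y f - avg Sp Y)) = (\<Sum>f\<in>Sp. X f * Y f)
      - avg Sp Y * (\<Sum>f\<in>Sp. X f) - avg Sp X * (\<Sum>f\<in>Sp. Y f) + ?N * (avg Sp X * avg Sp Y)"
    by (simp add: sum.distrib sum_subtractf sum_distrib_left)
  then show ?thesis by (simp add: sums cov_def algebra_simps)
qed

lemma sum_sq_dev_sum_eq_sum_cov:
  fixes Y :: "'i \<Rightarrow> 'f \<Rightarrow> real"
  assumes "finite Sp" "Sp \<noteq> {}" "finite I"
  shows "(\<Sum>f\<in>Sp. ((\<Sum>x\<in>I. Y x f) - (\<Sum>x\<in>I. avg Sp (Y x)))^2)
       = real (card Sp) * (\<Sum>x\<in>I. \<Sum>y\<in>I. cov Sp (Y x) (Y y))"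
proof -
  have "((\<Sum>x\<in>I. Y x f) - (\<Sum>x\<in>I. avg Sp (Y x)))^2
      = (\<Sum>x\<in>I. \<Sum>y\<in>I. (Y x f - avg Sp (Y x)) * (Y y f - avg Sp (Y y)))" for f
    by (simp add: power2_eq_square sum_subtractf[symmetric] sum_product)
  then have "(\<Sum>f\<in>Sp. ((\<Sum>x\<in>I. Y x f) - (\<Sum>x\<in>I. avg Sp (Y x)))^2)
      = (\<Sum>x\<in>I. \<Sum>y\<in>I. \<Sum>f\<in>Sp. (Y x f - avg Sp (Y x)) * (Y y f - avg Sp (Y y)))"
    by (simp add: sum.swap[of _ Sp])
  also have "\<dots> = real (card Sp) * (\<Sum>x\<in>I. \<Sum>y\<in>I. cov Sp (Y x) (Y y))"
    using sum_centered_product[OF assms(1,2)] by (simp add: sum_distrib_left)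
  finally show ?thesis .
qed

lemma card_dev_gt_le_sum_sq_dev:
  fixes X :: "'f \<Rightarrow> real"
  assumes "finite Sp" "t > 0"
  shows "real (card {f \<in> Sp. t < \<bar>X f - m\<bar>}) * t^2 \<le> (\<Sum>f\<in>Sp. (X f - m)^2)"
proof -
  have "real (card {f \<in> Sp. t < \<bar>X f - m\<bar>}) * t^2 = (\<Sum>f\<in>Sp. ind (t < \<bar>X f - m\<bar>) * t^2)"
    using assms by (simp add: sum_ind_card sum_distrib_right[symmetric])
  also have "\<dots> \<le> (\<Sum>f\<in>Sp. (X f - m)^2)"
  proof (rule sum_mono)
    fix f
    have "t^2 \<le> (X f - m)^2" if "t < \<bar>X f - m\<bar>"
      using that assms power_mono[of t "\<bar>X f - m\<bar>" 2] by simp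
    then show "ind (t < \<bar>X f - m\<bar>) * t^2 \<le> (X f - m)^2"
      by (cases "t < \<bar>X f - m\<bar>") auto
  qed
  finally show ?thesis .
qed

lemma cov_le_one:
  assumes "finite Sp" "Sp \<noteq> {}"
    and "\<And>f. f \<in> Sp \<Longrightarrow> 0 \<le> X f \<and> X f \<le> 1"
    and "\<And>f. f \<in> Sp \<Longrightarrow> 0 \<le> Y f \<and> Y f \<le> 1"
  shows "cov Sp X Y \<le> 1"
proof -
  have N: "real (card Sp) > 0" using assms by (simp add: card_gt_0_iff)
  have "(\<Sum>f\<in>Sp. X f * Y f) \<le> (\<Sum>f\<in>Sp. 1)"
    using assms by (intro sum_mono) (simp add: mult_le_one)
  then have "avg Sp (\<lambda>f. X f * Y f) \<le> 1" using N by (simp add: avg_def)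
  moreover have "avg Sp X \<ge> 0" "avg Sp Y \<ge> 0"
    using assms unfolding avg_def by (auto intro!: divide_nonneg_nonneg sum_nonneg)
  ultimately show ?thesis unfolding cov_def by (smt (verit) mult_nonneg_nonneg)
qed

lemma sum_cov_le:
  fixes C :: "'i \<Rightarrow> 'i \<Rightarrow> real"
  assumes "finite I"
    and "\<And>x. x \<in> I \<Longrightarrow> C x x \<le> 1"
    and "\<And>x y. x \<in> I \<Longrightarrow> y \<in> I \<Longrightarrow> x \<noteq> y \<Longrightarrow> adj x y \<Longrightarrow> C x y \<le> g"
    and "\<And>x y. x \<in> I \<Longrightarrow> y \<in> I \<Longrightarrow> x \<noteq> y \<Longrightarrow> \<not> adj x y \<Longrightarrow> C x y \<le> r"
    and "g \<ge> 0" "r \<ge> 0"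
  shows "(\<Sum>x\<in>I. \<Sum>y\<in>I. C x y)
    \<le> real (card I) + g * (\<Sum>x\<in>I. \<Sum>y\<in>I. ind (x \<noteq> y \<and> adj x y)) + r * real (card I)^2"
proof -
  have "(\<Sum>x\<in>I. \<Sum>y\<in>I. C x y)
      \<le> (\<Sum>x\<in>I. \<Sum>y\<in>I. ind (x = y) + g * ind (x \<noteq> y \<and> adj x y) + r)"
  proof (intro sum_mono)
    fix x y assume "x \<in> I" "y \<in> I"
    then show "C x y \<le> ind (x = y) + g * ind (x \<noteq> y \<and> adj x y) + r"
      using assms(2)[of x] assms(3)[of x y] assms(4)[of x y] assms(5,6)
      by (cases "x = y"; cases "adj x y") auto
  qed
  also have "\<dots> = (\<Sum>x\<in>I. \<Sum>y\<in>I. ind (x = y))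
      + g * (\<Sum>x\<in>I. \<Sum>y\<in>I. ind (x \<noteq> y \<and> adj x y)) + r * real (card I)^2"
    by (simp add: sum.distrib sum_distrib_left power2_eq_square)
  also have "(\<Sum>x\<in>I. \<Sum>y\<in>I. ind (x = y)) = real (card I)"
    using assms(1) by (simp add: ind_def of_bool_def sum.delta)
  finally show ?thesis .
qed

lemma avg_cong: "(\<And>f. f \<in> Sp \<Longrightarrow> X f = Y f) \<Longrightarrow> avg Sp X = avg Sp Y"
  unfolding avg_def by simp

section \<open>Colourings with prescribed class sizes\<close>

lemma colorings_finite: "finite (colorings s n c)"
proof (rule finite_subset)
  show "colorings s n c \<subseteq> {..<n} \<rightarrow>\<^sub>E {..<s}"
    by (auto simp: colorings_def)
qed (simp add: finite_PiE)

lemma coloring_lt: "f \<in> colorings s n c \<Longrightarrow> v < n \<Longrightarrow> f v < s"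
  by (auto simp: colorings_def)

lemma coloring_class_size:
  "f \<in> colorings s n c \<Longrightarrow> i < s \<Longrightarrow> (\<Sum>v<n. ind (f v = i)) = real (c i)"
  by (simp add: sum_ind_card colorings_def)

text \<open>Colour the first c 0 vertices with colour 0, the next c 1 with colour 1, and so on.\<close>
lemma colorings_sum_nonempty: "colorings s (\<Sum>i<s. c i) c \<noteq> {}"
proof (induction s)
  case 0
  have "(\<lambda>_. undefined) \<in> colorings 0 0 c" by (auto simp: colorings_def)
  then show ?case by auto
next
  case (Suc s)
  define n' where "n' = (\<Sum>i<s. c i)"
  define n where "n = (\<Sum>i<Suc s. c i)"
  have nn: "n = n' + c s" by (simp add: n_def n'_def)
  from Suc obtain f where f: "f \<in> colorings s n' c" unfolding n'_def by auto
  define g where "g v = (if v < n' then f v else if v < n then s else undefined)" for v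
  have f_lt: "v < n' \<Longrightarrow> f v < s" for v using f by (rule coloring_lt)
  have "g \<in> colorings (Suc s) n c"
    unfolding colorings_def
  proof (intro CollectI conjI allI impI)
    show "g \<in> {..<n} \<rightarrow>\<^sub>E {..<Suc s}"
      using f_lt nn by (auto simp: g_def PiE_def extensional_def less_Suc_eq)
    fix i assume i: "i < Suc s"
    show "card {v \<in> {..<n}. g v = i} = c i"
    proof (cases "i < s")
      case True
      have "{v \<in> {..<n}. g v = i} = {v \<in> {..<n'}. f v = i}"
        using True nn by (auto simp: g_def)
      then show ?thesis using f True by (simp add: colorings_def)
    next
      case False
      with i have "i = s" by simp
      have g_eq: "g v = s \<longleftrightarrow> n' \<le> v" if "v < n" for v
        using f_lt[of v] that by (auto simp: g_def)
      have "{v \<in> {..<n}. g v = i} = {n'..<n}"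
      proof (rule set_eqI)
        show "v \<in> {v \<in> {..<n}. g v = i} \<longleftrightarrow> v \<in> {n'..<n}" for v
          using g_eq[of v] nn \<open>i = s\<close> by auto
      qed
      then show ?thesis using nn \<open>i = s\<close> by simp
    qed
  qed
  then show ?case unfolding n_def by auto
qed

lemma colorings_nonempty: "composition s n c \<Longrightarrow> colorings s n c \<noteq> {}"
  using colorings_sum_nonempty[of s c] by (auto simp: composition_def)

lemma coloring_comp_transpose:
  assumes f: "f \<in> colorings s n c" and ab: "a < n" "b < n"
  shows "f \<circ> Transposition.transpose a b \<in> colorings s n c"
proof -
  let ?t = "Transposition.transpose a b"
  have t_lt: "?t v < n \<longleftrightarrow> v < n" for v
    using ab by (auto simp: Transposition.transpose_def)
  have "card {v \<in> {..<n}. f (?t v) = i} = card {v \<in> {..<n}. f v = i}" for i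
  proof (rule bij_betw_same_card)
    show "bij_betw ?t {v \<in> {..<n}. f (?t v) = i} {v \<in> {..<n}. f v = i}"
      by (rule bij_betw_byWitness[where f' = ?t]) (auto simp: t_lt)
  qed
  then show ?thesis
    using f t_lt by (auto simp: colorings_def PiE_def extensional_def Pi_def Transposition.transpose_def)
qed

lemma card_colorings_comp_transpose:
  assumes "a < n" "b < n"
  shows "card {f \<in> colorings s n c. P (f \<circ> Transposition.transpose a b)}
    = card {f \<in> colorings s n c. P f}"
proof (rule bij_betw_same_card)
  show "bij_betw (\<lambda>f. f \<circ> Transposition.transpose a b)
      {f \<in> colorings s n c. P (f \<circ> Transposition.transpose a b)} {f \<in> colorings s n c. P f}"
    by (rule bij_betw_byWitness[where f' = "\<lambda>f. f \<circ> Transposition.transpose a b"])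
      (auto simp: comp_assoc coloring_comp_transpose assms)
qed

lemma card_colorings_map_append_eq:
  assumes "distinct (pre @ xs)" "distinct (pre @ ys)" "length xs = length ys"
    "set pre \<subseteq> {..<n}" "set xs \<subseteq> {..<n}" "set ys \<subseteq> {..<n}"
  shows "card {f \<in> colorings s n c. map f (pre @ xs) = is}
    = card {f \<in> colorings s n c. map f (pre @ ys) = is}"
  using assms
proof (induction xs arbitrary: pre ys)
  case Nil
  then show ?case by simp
next
  case (Cons a xs)
  then obtain b ys' where ys: "ys = b # ys'" by (cases ys) auto
  have ab: "a < n" "b < n" using Cons.prems ys by auto
  let ?t = "Transposition.transpose a b"
  have "map ?t pre = pre"
    using Cons.prems ys by (auto intro!: map_idI simp: Transposition.transpose_def)
  then have map_t: "map ?t (pre @ b # ys') = (pre @ [a]) @ map ?t ys'"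
    by simp
  have "card {f \<in> colorings s n c. map f (pre @ b # ys') = is}
      = card {f \<in> colorings s n c. map (f \<circ> ?t) (pre @ b # ys') = is}"
    using card_colorings_comp_transpose[OF ab, where P = "\<lambda>f. map f (pre @ b # ys') = is"]
    by simp
  also have "\<dots> = card {f \<in> colorings s n c. map f ((pre @ [a]) @ map ?t ys') = is}"
    by (simp only: map_t[symmetric] map_map)
  also have "\<dots> = card {f \<in> colorings s n c. map f ((pre @ [a]) @ xs) = is}"
  proof (rule sym, rule Cons.IH)
    have "distinct (map ?t (pre @ b # ys'))"
      using Cons.prems(2) ys by (simp only: distinct_map inj_on_transpose)
    then show "distinct ((pre @ [a]) @ map ?t ys')" by (simp only: map_t)
    show "set (map ?t ys') \<subseteq> {..<n}"
      using Cons.prems ab ys by (auto simp: Transposition.transpose_def)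
  qed (use Cons.prems ys in auto)
  finally show ?case using ys by simp
qed

lemma card_colorings_map_eq:
  assumes "distinct xs" "distinct ys" "length xs = length ys" "set xs \<subseteq> {..<n}" "set ys \<subseteq> {..<n}"
  shows "card {f \<in> colorings s n c. map f xs = is} = card {f \<in> colorings s n c. map f ys = is}"
  using card_colorings_map_append_eq[of "[]" xs ys n s c "is"] assms by simp

text \<open>Since the number of colourings with a prescribed pattern on a tuple of distinct vertices
  does not depend on the tuple, it equals its average over all such tuples; exchanging the
  order of summation, that average is computed colouring by colouring.\<close>

context
  fixes s n :: nat and c :: "nat \<Rightarrow> nat"
  assumes comp: "composition s n c"
begin

lemma card_colorings_pos: "0 < real (card (colorings s n c))"
  using colorings_finite colorings_nonempty[OF comp] by (simp add: card_gt_0_iff)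

lemma card_colorings_vertex:
  assumes "u < n" "i < s"
  shows "real (card {f \<in> colorings s n c. f u = i}) * real n = real (card (colorings s n c)) * real (c i)"
proof -
  let ?K = "\<lambda>u. real (card {f \<in> colorings s n c. f u = i})"
  have "?K u' = ?K u" if "u' < n" for u'
    using card_colorings_map_eq[of "[u']" "[u]" n s c "[i]"] that assms by simp
  then have "real n * ?K u = (\<Sum>u'<n. ?K u')" by simp
  also have "\<dots> = (\<Sum>f\<in>colorings s n c. \<Sum>u'<n. ind (f u' = i))"
    using colorings_finite by (simp add: sum_ind_card[symmetric] sum.swap[of _ "{..<n}"])
  also have "\<dots> = (\<Sum>f\<in>colorings s n c. real (c i))"
    using coloring_class_size assms by (intro sum.cong) auto
  finally show ?thesis by (simp add: mult.commute)
qed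

lemma sum_pairs_in_classes:
  assumes f: "f \<in> colorings s n c" and "i < s" "j < s"
  shows "(\<Sum>u<n. \<Sum>v<n. ind (distinct [u,v]) * (ind (f u = i) * ind (f v = j)))
       = real (c i) * real (c j) - ind (i = j) * real (c i)"
proof -
  have "(\<Sum>u<n. \<Sum>v<n. ind (distinct [u,v]) * (ind (f u = i) * ind (f v = j)))
      = (\<Sum>u<n. \<Sum>v<n. ind (f u = i) * (ind (v \<noteq> u) * ind (f v = j)))"
    by (intro sum.cong refl) (auto simp: ind_def)
  also have "\<dots> = (\<Sum>u<n. ind (f u = i) * (\<Sum>v<n. ind (v \<noteq> u) * ind (f v = j)))"
    by (simp only: sum_distrib_left)
  also have "\<dots> = (\<Sum>u<n. ind (f u = i) * (real (c j) - ind (f u = j)))"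
    using sum_ind_neq_mult[of "{..<n}" _ "\<lambda>v. ind (f v = j)"] coloring_class_size[OF f assms(3)]
    by (intro sum.cong refl) simp
  also have "\<dots> = (\<Sum>u<n. real (c j) * ind (f u = i) - ind (i = j) * ind (f u = i))"
    by (intro sum.cong refl) (auto simp: ind_def)
  also have "\<dots> = real (c i) * real (c j) - ind (i = j) * real (c i)"
    using coloring_class_size[OF f assms(2)] by (simp add: sum_subtractf sum_distrib_left[symmetric])
  finally show ?thesis .
qed

lemma card_colorings_pair:
  assumes "u < n" "v < n" "u \<noteq> v" "i < s" "j < s"
  shows "real (card {f \<in> colorings s n c. f u = i \<and> f v = j}) * (real n * (real n - 1))
       = real (card (colorings s n c)) * (real (c i) * real (c j) - ind (i = j) * real (c i))"
proof -
  let ?K = "\<lambda>u v. real (card {f \<in> colorings s n c. f u = i \<and> f v = j})"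
  have "?K u' v' = ?K u v" if "u' < n" "v' < n" "u' \<noteq> v'" for u' v'
    using card_colorings_map_eq[of "[u',v']" "[u,v]" n s c "[i,j]"] that assms by simp
  then have "(\<Sum>u'<n. \<Sum>v'<n. ind (distinct [u',v']) * ?K u' v')
      = (\<Sum>u'<n. \<Sum>v'<n. ind (distinct [u',v'])) * ?K u v"
    by (simp add: sum_distrib_right) (intro sum.cong refl, auto simp: ind_def)
  then have "?K u v * (real n * (real n - 1))
      = (\<Sum>u'<n. \<Sum>v'<n. ind (distinct [u',v']) * ?K u' v')"
    by (simp only: sum_ind_distinct2 mult.commute)
  also have "\<dots> = (\<Sum>f\<in>colorings s n c. \<Sum>u'<n. \<Sum>v'<n.
      ind (distinct [u',v']) * (ind (f u' = i) * ind (f v' = j)))"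
    using colorings_finite
    by (simp add: sum_ind_card[symmetric] sum_distrib_left ind_conj sum.swap[of _ "colorings s n c"])
  also have "\<dots> = (\<Sum>f\<in>colorings s n c. real (c i) * real (c j) - ind (i = j) * real (c i))"
    using sum_pairs_in_classes assms by (intro sum.cong) auto
  finally show ?thesis by simp
qed

lemma card_colorings_triple_le:
  assumes "distinct [u,v,w]" "u < n" "v < n" "w < n" "i < s"
  shows "real (card {f \<in> colorings s n c. f u = i \<and> f v = i \<and> f w = i})
      * (real n * (real n - 1) * (real n - 2)) \<le> real (card (colorings s n c)) * real (c i) ^ 3"
proof -
  let ?K = "\<lambda>u v w. real (card {f \<in> colorings s n c. f u = i \<and> f v = i \<and> f w = i})"
  have "?K u' v' w' = ?K u v w" if "distinct [u',v',w']" "u' < n" "v' < n" "w' < n" for u' v' w'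
    using card_colorings_map_eq[of "[u',v',w']" "[u,v,w]" n s c "[i,i,i]"] that assms by simp
  then have "(\<Sum>u'<n. \<Sum>v'<n. \<Sum>w'<n. ind (distinct [u',v',w']) * ?K u' v' w')
      = (\<Sum>u'<n. \<Sum>v'<n. \<Sum>w'<n. ind (distinct [u',v',w'])) * ?K u v w"
    by (simp add: sum_distrib_right) (intro sum.cong refl, auto simp: ind_def)
  then have "?K u v w * (real n * (real n - 1) * (real n - 2))
      = (\<Sum>u'<n. \<Sum>v'<n. \<Sum>w'<n. ind (distinct [u',v',w']) * ?K u' v' w')"
    by (simp only: sum_ind_distinct3 mult.commute)
  also have "\<dots> = (\<Sum>f\<in>colorings s n c. \<Sum>u'<n. \<Sum>v'<n. \<Sum>w'<n.
      ind (distinct [u',v',w']) * (ind (f u' = i) * ind (f v' = i) * ind (f w' = i)))"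
    using colorings_finite by (simp add: sum_ind_card[symmetric] sum_distrib_left ind_conj sum_swap3)
  also have "\<dots> \<le> (\<Sum>f\<in>colorings s n c. \<Sum>u'<n. \<Sum>v'<n. \<Sum>w'<n.
      ind (f u' = i) * ind (f v' = i) * ind (f w' = i))"
    by (intro sum_mono ind_mult_le) simp
  also have "\<dots> = (\<Sum>f\<in>colorings s n c. real (c i) ^ 3)"
    using coloring_class_size assms(5) by (simp add: sum_product3 power3_eq_cube)
  finally show ?thesis by simp
qed

lemma ind_distinct4_le:
  "ind (distinct [u,v,w,x]) * ((ind a * ind b) * (ind d * ind e))
    \<le> (ind (distinct [u,v]) * (ind a * ind b)) * (ind (distinct [w,x]) * (ind d * ind e))"
  by (simp add: ind_def)

lemma card_colorings_two_pairs_le: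
  assumes "distinct [u,v,w,x]" "u < n" "v < n" "w < n" "x < n" "i < s" "j < s"
  shows "real (card {f \<in> colorings s n c. f u = i \<and> f v = i \<and> f w = j \<and> f x = j})
      * (real n * (real n - 1) * (real n - 2) * (real n - 3))
    \<le> real (card (colorings s n c)) * ((real (c i) ^ 2 - real (c i)) * (real (c j) ^ 2 - real (c j)))"
proof -
  let ?K = "\<lambda>u v w x. real (card {f \<in> colorings s n c. f u = i \<and> f v = i \<and> f w = j \<and> f x = j})"
  let ?P = "\<lambda>f u v k. ind (distinct [u,v]) * (ind (f u = k) * ind (f v = k))"
  have "?K u' v' w' x' = ?K u v w x"
    if "distinct [u',v',w',x']" "u' < n" "v' < n" "w' < n" "x' < n" for u' v' w' x'
    using card_colorings_map_eq[of "[u',v',w',x']" "[u,v,w,x]" n s c "[i,i,j,j]"] that assms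
    by simp
  then have "(\<Sum>u'<n. \<Sum>v'<n. \<Sum>w'<n. \<Sum>x'<n. ind (distinct [u',v',w',x']) * ?K u' v' w' x')
      = (\<Sum>u'<n. \<Sum>v'<n. \<Sum>w'<n. \<Sum>x'<n. ind (distinct [u',v',w',x'])) * ?K u v w x"
    by (simp add: sum_distrib_right) (intro sum.cong refl, auto simp: ind_def)
  then have "?K u v w x * (real n * (real n - 1) * (real n - 2) * (real n - 3))
      = (\<Sum>u'<n. \<Sum>v'<n. \<Sum>w'<n. \<Sum>x'<n. ind (distinct [u',v',w',x']) * ?K u' v' w' x')"
    by (simp only: sum_ind_distinct4 mult.commute)
  also have "\<dots> = (\<Sum>f\<in>colorings s n c. \<Sum>u'<n. \<Sum>v'<n. \<Sum>w'<n. \<Sum>x'<n.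
      ind (distinct [u',v',w',x']) * ((ind (f u' = i) * ind (f v' = i)) * (ind (f w' = j) * ind (f x' = j))))"
    using colorings_finite by (simp add: sum_ind_card[symmetric] sum_distrib_left ind_conj sum_swap4)
  also have "\<dots> \<le> (\<Sum>f\<in>colorings s n c. \<Sum>u'<n. \<Sum>v'<n. \<Sum>w'<n. \<Sum>x'<n. ?P f u' v' i * ?P f w' x' j)"
    by (intro sum_mono ind_distinct4_le)
  also have "\<dots> = (\<Sum>f\<in>colorings s n c. (real (c i) ^ 2 - real (c i)) * (real (c j) ^ 2 - real (c j)))"
    using sum_pairs_in_classes assms(6,7)
    by (intro sum.cong refl) (simp add: sum_product22 power2_eq_square)
  finally show ?thesis by simp
qed

end

section \<open>Simple graphs\<close>

lemma simple_graph_edge: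
  "simple_graph n E \<Longrightarrow> e \<in> E \<Longrightarrow> \<exists>u v. e = {u, v} \<and> u < n \<and> v < n \<and> u \<noteq> v"
  unfolding simple_graph_def by blast

lemma simple_graph_finite:
  assumes "simple_graph n E"
  shows "finite E"
proof (rule finite_subset)
  show "E \<subseteq> (\<lambda>(u, v). {u, v}) ` ({..<n} \<times> {..<n})"
    using simple_graph_edge[OF assms] by fastforce
qed simp

lemma simple_graph_edge_subset: "simple_graph n E \<Longrightarrow> e \<in> E \<Longrightarrow> e \<subseteq> {..<n}"
  using simple_graph_edge by fastforce

lemma simple_graph_edge_card: "simple_graph n E \<Longrightarrow> e \<in> E \<Longrightarrow> card e = 2"
  using simple_graph_edge by fastforce

lemma simple_graph_edge_at:
  assumes "simple_graph n E" "e \<in> E" "h \<in> e"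
  shows "\<exists>a. e = {h, a} \<and> a \<noteq> h \<and> a < n"
  using simple_graph_edge[OF assms(1,2)] assms(3) by (auto simp: insert_commute)

lemma disjoint_edges_shape:
  assumes "simple_graph n E" "e \<in> E" "e' \<in> E" "e \<inter> e' = {}"
  obtains u v w x where "distinct [u,v,w,x]" "u < n" "v < n" "w < n" "x < n" "e = {u,v}" "e' = {w,x}"
proof -
  obtain u v where "e = {u,v}" "u < n" "v < n" "u \<noteq> v"
    using simple_graph_edge[OF assms(1,2)] by blast
  moreover obtain w x where "e' = {w,x}" "w < n" "x < n" "w \<noteq> x"
    using simple_graph_edge[OF assms(1,3)] by blast
  ultimately show thesis
    using assms(4) by (intro that[of u v w x]) auto
qed

lemma adjacent_edges_shape:
  assumes "simple_graph n E" "e \<in> E" "e' \<in> E" "e \<noteq> e'" "e \<inter> e' \<noteq> {}"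
  obtains a b d where "distinct [a,b,d]" "a < n" "b < n" "d < n" "e = {a,b}" "e' = {a,d}"
proof -
  obtain a where a: "a \<in> e" "a \<in> e'" using assms(5) by blast
  obtain b where b: "e = {a,b}" "b \<noteq> a" "b < n"
    using simple_graph_edge_at[OF assms(1,2) a(1)] by blast
  obtain d where d: "e' = {a,d}" "d \<noteq> a" "d < n"
    using simple_graph_edge_at[OF assms(1,3) a(2)] by blast
  have "a < n" using simple_graph_edge_subset[OF assms(1,2)] a(1) by auto
  moreover have "b \<noteq> d" using b d assms(4) by auto
  ultimately show thesis using b d by (intro that[of a b d]) auto
qed

lemma degree_eq_sum_ind: "simple_graph n E \<Longrightarrow> real (degree E v) = (\<Sum>e\<in>E. ind (v \<in> e))"
  unfolding degree_def using simple_graph_finite by (simp add: sum_ind_card)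

lemma degree_le_card: "simple_graph n E \<Longrightarrow> degree E v \<le> card E"
  unfolding degree_def using simple_graph_finite by (intro card_mono) auto

lemma sum_ind_edge_member:
  assumes "simple_graph n E" "e \<in> E"
  shows "(\<Sum>v<n. ind (v \<in> e)) = 2"
proof -
  have "{v \<in> {..<n}. v \<in> e} = e" using simple_graph_edge_subset[OF assms] by auto
  then show ?thesis using simple_graph_edge_card[OF assms] by (simp add: sum_ind_card)
qed

lemma sum_degree:
  assumes "simple_graph n E"
  shows "(\<Sum>v<n. real (degree E v)) = 2 * real (card E)"
proof -
  have "(\<Sum>v<n. real (degree E v)) = (\<Sum>e\<in>E. \<Sum>v<n. ind (v \<in> e))"
    by (simp add: degree_eq_sum_ind[OF assms]) (rule sum.swap)
  also have "\<dots> = 2 * real (card E)"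
    using sum_ind_edge_member[OF assms] by simp
  finally show ?thesis .
qed

lemma Sigma2_nonneg: "0 \<le> Sigma2 n E"
  unfolding Sigma2_def by (intro sum_nonneg) simp

lemma Sigma2_le_degree_bound:
  assumes "simple_graph n E" "\<And>v. v < n \<Longrightarrow> real (degree E v) \<le> D"
  shows "Sigma2 n E \<le> 2 * real (card E) * D"
proof -
  have "Sigma2 n E \<le> (\<Sum>v<n. real (degree E v) * D)"
    unfolding Sigma2_def power2_eq_square using assms(2) by (intro sum_mono mult_left_mono) auto
  also have "\<dots> = 2 * real (card E) * D"
    using sum_degree[OF assms(1)] by (simp add: sum_distrib_right[symmetric])
  finally show ?thesis .
qed

lemma Sigma2_le: "simple_graph n E \<Longrightarrow> Sigma2 n E \<le> 2 * real (card E)^2"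
  using Sigma2_le_degree_bound[of n E "real (card E)"] degree_le_card
  by (simp add: power2_eq_square mult.assoc)

lemma Sigma2_le_max_degree:
  assumes "simple_graph n E" "n > 0"
  obtains h where "h < n" "Sigma2 n E \<le> 2 * real (card E) * real (degree E h)"
proof -
  have "Max (degree E ` {..<n}) \<in> degree E ` {..<n}"
    using assms(2) by (intro Max_in) auto
  then obtain h where "h < n" "degree E h = Max (degree E ` {..<n})"
    by auto
  then show thesis
    using that Sigma2_le_degree_bound[OF assms(1), of "real (degree E h)"] by simp
qed

lemma Sigma2_eq_sum_common:
  assumes "simple_graph n E"
  shows "Sigma2 n E = (\<Sum>e\<in>E. \<Sum>e'\<in>E. \<Sum>v<n. ind (v \<in> e) * ind (v \<in> e'))"
proof -
  have "Sigma2 n E = (\<Sum>v<n. \<Sum>e\<in>E. \<Sum>e'\<in>E. ind (v \<in> e) * ind (v \<in> e'))"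
    unfolding Sigma2_def power2_eq_square degree_eq_sum_ind[OF assms] by (simp only: sum_product)
  then show ?thesis
    by (simp add: sum.swap[of _ "{..<n}"])
qed

lemma sum_ind_adjacent_le_Sigma2:
  assumes "simple_graph n E"
  shows "(\<Sum>e\<in>E. \<Sum>e'\<in>E. ind (e \<noteq> e' \<and> e \<inter> e' \<noteq> {})) \<le> Sigma2 n E"
  unfolding Sigma2_eq_sum_common[OF assms]
proof (intro sum_mono)
  fix e e' assume e: "e \<in> E"
  show "ind (e \<noteq> e' \<and> e \<inter> e' \<noteq> {}) \<le> (\<Sum>v<n. ind (v \<in> e) * ind (v \<in> e'))"
  proof (cases "e \<inter> e' = {}")
    case False
    then obtain v where v: "v \<in> e" "v \<in> e'" by blast
    then have "v < n" using simple_graph_edge_subset[OF assms e] by auto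
    then have "ind (v \<in> e) * ind (v \<in> e') \<le> (\<Sum>v<n. ind (v \<in> e) * ind (v \<in> e'))"
      by (intro member_le_sum) auto
    then have "1 \<le> (\<Sum>v<n. ind (v \<in> e) * ind (v \<in> e'))" using v by simp
    then show ?thesis using ind_le_one[of "e \<noteq> e' \<and> e \<inter> e' \<noteq> {}"] by linarith
  qed (simp add: sum_nonneg)
qed

lemma max_degree_ge_zeta:
  assumes sg: "simple_graph n E" and n: "0 < n" and m: "0 < card E" and a: "0 \<le> a" "a \<le> zeta n E"
  obtains h where "h < n" "a^2 * real (card E) / 2 \<le> real (degree E h)"
proof -
  let ?m = "real (card E)"
  obtain h where h: "h < n" "Sigma2 n E \<le> 2 * ?m * real (degree E h)"
    using Sigma2_le_max_degree[OF sg n] by blast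
  have "a * ?m \<le> sqrt (Sigma2 n E)"
    using a m unfolding zeta_def by (simp add: field_simps)
  then have "(a * ?m)^2 \<le> (sqrt (Sigma2 n E))^2"
    using a by (intro power_mono) auto
  then have "(a * ?m)^2 \<le> Sigma2 n E"
    using Sigma2_nonneg by simp
  then have "?m * (a^2 * ?m) \<le> ?m * (2 * real (degree E h))"
    using h(2) by (simp add: power2_eq_square mult_ac)
  then show thesis
    using that[OF h(1)] m by simp
qed

lemma sum_sq_dev_edge_sum_le:
  fixes Y :: "nat set \<Rightarrow> 'f \<Rightarrow> real"
  assumes Sp: "finite Sp" "Sp \<noteq> {}" and sg: "simple_graph n E"
    and Y01: "\<And>e f. e \<in> E \<Longrightarrow> f \<in> Sp \<Longrightarrow> 0 \<le> Y e f \<and> Y e f \<le> 1"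
    and adj: "\<And>e e'. e \<in> E \<Longrightarrow> e' \<in> E \<Longrightarrow> e \<noteq> e' \<Longrightarrow> e \<inter> e' \<noteq> {}
      \<Longrightarrow> cov Sp (Y e) (Y e') \<le> g"
    and disj: "\<And>e e'. e \<in> E \<Longrightarrow> e' \<in> E \<Longrightarrow> e \<noteq> e' \<Longrightarrow> e \<inter> e' = {}
      \<Longrightarrow> cov Sp (Y e) (Y e') \<le> r"
    and "g \<ge> 0" "r \<ge> 0"
  shows "(\<Sum>f\<in>Sp. ((\<Sum>e\<in>E. Y e f) - (\<Sum>e\<in>E. avg Sp (Y e)))^2)
     \<le> real (card Sp) * (real (card E) + g * Sigma2 n E + r * real (card E)^2)"
proof -
  have "(\<Sum>e\<in>E. \<Sum>e'\<in>E. cov Sp (Y e) (Y e'))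
      \<le> real (card E) + g * (\<Sum>e\<in>E. \<Sum>e'\<in>E. ind (e \<noteq> e' \<and> e \<inter> e' \<noteq> {})) + r * real (card E)^2"
  proof (rule sum_cov_le[OF simple_graph_finite[OF sg] _ adj _ \<open>g \<ge> 0\<close> \<open>r \<ge> 0\<close>])
    show "cov Sp (Y e) (Y e) \<le> 1" if "e \<in> E" for e
      using Y01 that by (intro cov_le_one[OF Sp]) auto
    show "cov Sp (Y e) (Y e') \<le> r" if "e \<in> E" "e' \<in> E" "e \<noteq> e'" "\<not> e \<inter> e' \<noteq> {}" for e e'
      using disj that by blast
  qed
  also have "\<dots> \<le> real (card E) + g * Sigma2 n E + r * real (card E)^2"
    using sum_ind_adjacent_le_Sigma2[OF sg] \<open>g \<ge> 0\<close> by (simp add: mult_left_mono)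
  finally show ?thesis
    unfolding sum_sq_dev_sum_eq_sum_cov[OF Sp simple_graph_finite[OF sg]] by (simp add: mult_left_mono)
qed

section \<open>Monochromatic edges\<close>

definition edge_colored :: "nat \<Rightarrow> nat set \<Rightarrow> (nat \<Rightarrow> nat) \<Rightarrow> real" where
  "edge_colored i e f = ind (\<forall>v\<in>e. f v = i)"

definition edge_mono :: "nat \<Rightarrow> nat set \<Rightarrow> (nat \<Rightarrow> nat) \<Rightarrow> real" where
  "edge_mono s e f = (\<Sum>i<s. edge_colored i e f)"

lemma Mi_eq_sum_edge_colored: "simple_graph n E \<Longrightarrow> Mi E i f = (\<Sum>e\<in>E. edge_colored i e f)"
  unfolding Mi_def edge_colored_def using simple_graph_finite by (simp add: sum_ind_card)

lemma Mtot_eq_sum_edge_mono: "simple_graph n E \<Longrightarrow> Mtot s E f = (\<Sum>e\<in>E. edge_mono s e f)"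
  unfolding Mtot_def edge_mono_def by (simp add: Mi_eq_sum_edge_colored sum.swap[of _ "{..<s}"])

lemma edge_colored_pair: "edge_colored i {a,b} f = ind (f a = i \<and> f b = i)"
  by (simp add: edge_colored_def)

lemma edge_colored_bounds: "0 \<le> edge_colored i e f \<and> edge_colored i e f \<le> 1"
  by (simp add: edge_colored_def)

lemma edge_mono_pair:
  assumes "f \<in> colorings s n c" "a < n"
  shows "edge_mono s {a,b} f = ind (f a = f b)"
proof -
  have "edge_mono s {a,b} f = (\<Sum>i<s. if i = f a then ind (f b = f a) else 0)"
    unfolding edge_mono_def edge_colored_pair by (intro sum.cong refl) (auto simp: ind_def)
  then show ?thesis using coloring_lt[OF assms] by (simp add: eq_commute)
qed

lemma edge_mono_bounds:
  assumes "simple_graph n E" "e \<in> E" "f \<in> colorings s n c"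
  shows "0 \<le> edge_mono s e f \<and> edge_mono s e f \<le> 1"
  using simple_graph_edge[OF assms(1,2)] edge_mono_pair[OF assms(3)] by auto

definition falling2 :: "nat \<Rightarrow> real" where "falling2 n = real n * (real n - 1)"
definition falling3 :: "nat \<Rightarrow> real" where "falling3 n = real n * (real n - 1) * (real n - 2)"
definition falling4 :: "nat \<Rightarrow> real" where
  "falling4 n = real n * (real n - 1) * (real n - 2) * (real n - 3)"

lemma falling2_pos: "2 \<le> n \<Longrightarrow> 0 < falling2 n" unfolding falling2_def by simp
lemma falling3_pos: "3 \<le> n \<Longrightarrow> 0 < falling3 n" unfolding falling3_def by simp
lemma falling4_pos: "4 \<le> n \<Longrightarrow> 0 < falling4 n" unfolding falling4_def by simp

definition class_prob :: "nat \<Rightarrow> (nat \<Rightarrow> nat) \<Rightarrow> nat \<Rightarrow> real" where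
  "class_prob n c i = (real (c i) ^ 2 - real (c i)) / falling2 n"

definition mono_prob :: "nat \<Rightarrow> nat \<Rightarrow> (nat \<Rightarrow> nat) \<Rightarrow> real" where
  "mono_prob s n c = (\<Sum>i<s. class_prob n c i)"

definition disjoint_cov_bound :: "nat \<Rightarrow> real" where
  "disjoint_cov_bound n = falling2 n ^ 2 / falling4 n - 1"

definition adjacent_cov_bound :: "nat \<Rightarrow> nat \<Rightarrow> (nat \<Rightarrow> nat) \<Rightarrow> real" where
  "adjacent_cov_bound s n c = (\<Sum>i<s. real (c i) ^ 3) / falling3 n - mono_prob s n c ^ 2"

lemma disjoint_cov_bound_nonneg:
  assumes "4 \<le> n"
  shows "0 \<le> disjoint_cov_bound n"
proof -
  have "(real n - 2) * (real n - 3) \<le> real n * (real n - 1)"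
    using assms by (simp add: algebra_simps)
  then have "falling4 n \<le> falling2 n ^ 2"
    using falling2_pos[of n] assms
    by (simp add: falling4_def falling2_def power2_eq_square mult.assoc mult_left_mono)
  then show ?thesis
    unfolding disjoint_cov_bound_def using falling4_pos[OF assms] by simp
qed

lemma class_prob_nonneg: "0 \<le> class_prob n c i"
proof -
  have "real (c i) \<le> real (c i) ^ 2" by (cases "c i") (simp_all add: power2_eq_square)
  moreover have "0 \<le> falling2 n" unfolding falling2_def by (cases n) auto
  ultimately show ?thesis unfolding class_prob_def by simp
qed

lemma mono_prob_nonneg: "0 \<le> mono_prob s n c"
  unfolding mono_prob_def by (intro sum_nonneg class_prob_nonneg)

lemma class_prob_le_mono_prob: "i < s \<Longrightarrow> class_prob n c i \<le> mono_prob s n c"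
  unfolding mono_prob_def by (intro member_le_sum class_prob_nonneg) auto

lemma class_prob_ge:
  assumes "2 \<le> n" "0 < \<beta>" "\<beta> * real n \<le> real (c i)" "2 / \<beta> \<le> real n - 1"
  shows "\<beta>^2 / 2 \<le> class_prob n c i"
proof -
  have n1: "0 < real n - 1" using assms(1) by simp
  have "\<beta> \<le> real (c i) / real n" using assms(1,3) by (simp add: field_simps)
  moreover have "\<beta> / 2 \<le> (real (c i) - 1) / (real n - 1)"
    using assms(2-4) n1 by (simp add: field_simps)
  ultimately have "\<beta> * (\<beta> / 2) \<le> (real (c i) / real n) * ((real (c i) - 1) / (real n - 1))"
    using assms(2) by (intro mult_mono) auto
  also have "\<dots> = class_prob n c i"
    unfolding class_prob_def falling2_def by (simp add: power2_eq_square field_simps)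
  finally show ?thesis by (simp add: power2_eq_square)
qed

lemma sum_cubes_sub_sq_sum_sq_le:
  fixes p :: "nat \<Rightarrow> real"
  assumes "(\<Sum>i<s. p i) = 1" "\<And>i. i < s \<Longrightarrow> 0 \<le> p i \<and> p i \<le> 1"
  shows "(\<Sum>i<s. p i ^ 3) - (\<Sum>i<s. p i ^ 2)^2 \<le> (\<Sum>i<s. (p i - a)^2)"
proof -
  have "(\<Sum>i<s. p i * (p i - a)^2) = (\<Sum>i<s. p i ^ 3 - 2 * a * p i ^ 2 + a^2 * p i)"
    by (intro sum.cong refl) (simp add: algebra_simps power2_eq_square power3_eq_cube)
  also have "\<dots> = (\<Sum>i<s. p i ^ 3) - 2 * a * (\<Sum>i<s. p i ^ 2) + a^2"
    using assms(1) by (simp add: sum.distrib sum_subtractf sum_distrib_left[symmetric])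
  finally have "(\<Sum>i<s. p i ^ 3) - (\<Sum>i<s. p i ^ 2)^2
      = (\<Sum>i<s. p i * (p i - a)^2) - ((\<Sum>i<s. p i ^ 2) - a)^2"
    by (simp add: power2_eq_square algebra_simps)
  also have "\<dots> \<le> (\<Sum>i<s. p i * (p i - a)^2)" by simp
  also have "\<dots> \<le> (\<Sum>i<s. (p i - a)^2)"
    using assms(2) by (intro sum_mono) (simp add: mult_left_le_one_le)
  finally show ?thesis .
qed

context
  fixes s n :: nat and c :: "nat \<Rightarrow> nat"
  assumes comp: "composition s n c"
begin

lemma part_le: "i < s \<Longrightarrow> c i \<le> n"
  using comp member_le_sum[of i "{..<s}" c] by (simp add: composition_def)

lemma sum_parts: "(\<Sum>i<s. real (c i)) = real n"
  using comp unfolding composition_def by (metis of_nat_sum)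

lemma mono_prob_le_one: "mono_prob s n c \<le> 1"
proof (cases "n \<ge> 2")
  case False
  then have "falling2 n = 0" unfolding falling2_def by (cases n) auto
  then show ?thesis unfolding mono_prob_def class_prob_def by simp
next
  case True
  have "(\<Sum>i<s. real (c i) ^ 2 - real (c i)) \<le> (\<Sum>i<s. real (c i) * (real n - 1))"
  proof (intro sum_mono)
    fix i assume "i \<in> {..<s}"
    then have "real (c i) * real (c i) \<le> real (c i) * real n"
      using part_le by (intro mult_left_mono) auto
    then show "real (c i) ^ 2 - real (c i) \<le> real (c i) * (real n - 1)"
      by (simp add: power2_eq_square algebra_simps)
  qed
  also have "\<dots> = falling2 n"
    unfolding falling2_def using sum_parts by (simp add: sum_distrib_right[symmetric])
  finally show ?thesis
    using falling2_pos[OF True] unfolding mono_prob_def class_prob_def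
    by (simp add: sum_divide_distrib[symmetric])
qed

lemma class_prob_le_one: "i < s \<Longrightarrow> class_prob n c i \<le> 1"
  using class_prob_le_mono_prob mono_prob_le_one by (blast intro: order_trans)

lemma avg_edge_colored:
  assumes "a < n" "b < n" "a \<noteq> b" "i < s"
  shows "avg (colorings s n c) (edge_colored i {a,b}) = class_prob n c i"
proof -
  have "real (card {f \<in> colorings s n c. f a = i \<and> f b = i}) * falling2 n
      = real (card (colorings s n c)) * (real (c i) ^ 2 - real (c i))"
    using card_colorings_pair[OF comp assms(1-3) assms(4) assms(4)]
    unfolding falling2_def by (simp add: power2_eq_square)
  moreover have "edge_colored i {a,b} = (\<lambda>f. ind (f a = i \<and> f b = i))"
    by (rule ext) (rule edge_colored_pair)
  ultimately show ?thesis
    using card_colorings_pos[OF comp] falling2_pos[of n] assms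
    by (simp add: avg_ind class_prob_def field_simps)
qed

lemma avg_edge_mono:
  assumes "a < n" "b < n" "a \<noteq> b"
  shows "avg (colorings s n c) (edge_mono s {a,b}) = mono_prob s n c"
  unfolding edge_mono_def mono_prob_def using avg_edge_colored[OF assms] by (simp add: avg_sum)

lemma avg_edge_colored_disjoint_le:
  assumes "distinct [u,v,w,x]" "u < n" "v < n" "w < n" "x < n" "i < s" "j < s"
  shows "avg (colorings s n c) (\<lambda>f. edge_colored i {u,v} f * edge_colored j {w,x} f)
    \<le> class_prob n c i * class_prob n c j * (falling2 n ^ 2 / falling4 n)"
proof -
  let ?K = "real (card {f \<in> colorings s n c. f u = i \<and> f v = i \<and> f w = j \<and> f x = j})"
    and ?N = "real (card (colorings s n c))"
    and ?X = "(real (c i) ^ 2 - real (c i)) * (real (c j) ^ 2 - real (c j))"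
  have n4: "4 \<le> n"
    using length_le_if_distinct_below[of "[u,v,w,x]" n] assms by simp
  have pos: "0 < ?N" "0 < falling4 n"
    using card_colorings_pos[OF comp] falling4_pos[OF n4] by auto
  have "avg (colorings s n c) (\<lambda>f. edge_colored i {u,v} f * edge_colored j {w,x} f) = ?K / ?N"
    by (simp add: edge_colored_pair ind_conj avg_ind conj_assoc)
  also have "\<dots> = (?K * falling4 n) / (?N * falling4 n)"
    using pos by simp
  also have "\<dots> \<le> (?N * ?X) / (?N * falling4 n)"
    using card_colorings_two_pairs_le[OF comp assms] pos
    by (intro divide_right_mono) (simp_all add: falling4_def)
  also have "\<dots> = class_prob n c i * class_prob n c j * (falling2 n ^ 2 / falling4 n)"
    using pos falling2_pos[of n] n4 by (simp add: class_prob_def power2_eq_square)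
  finally show ?thesis .
qed

lemma cov_edge_colored_disjoint_le:
  assumes "distinct [u,v,w,x]" "u < n" "v < n" "w < n" "x < n" "i < s"
  shows "cov (colorings s n c) (edge_colored i {u,v}) (edge_colored i {w,x}) \<le> disjoint_cov_bound n"
proof -
  have n4: "4 \<le> n"
    using length_le_if_distinct_below[of "[u,v,w,x]" n] assms by simp
  let ?q = "class_prob n c i"
  have "cov (colorings s n c) (edge_colored i {u,v}) (edge_colored i {w,x})
      \<le> ?q^2 * (falling2 n ^ 2 / falling4 n) - ?q * ?q"
    unfolding cov_def using avg_edge_colored_disjoint_le[OF assms assms(6)] assms
    by (simp add: avg_edge_colored power2_eq_square)
  also have "\<dots> = ?q^2 * disjoint_cov_bound n"
    unfolding disjoint_cov_bound_def by (simp add: algebra_simps power2_eq_square)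
  also have "\<dots> \<le> disjoint_cov_bound n"
    using class_prob_nonneg class_prob_le_one[OF assms(6)] disjoint_cov_bound_nonneg[OF n4]
    by (simp add: mult_left_le_one_le power_le_one)
  finally show ?thesis .
qed

lemma cov_edge_mono_disjoint_le:
  assumes "distinct [u,v,w,x]" "u < n" "v < n" "w < n" "x < n"
  shows "cov (colorings s n c) (edge_mono s {u,v}) (edge_mono s {w,x}) \<le> disjoint_cov_bound n"
proof -
  have n4: "4 \<le> n"
    using length_le_if_distinct_below[of "[u,v,w,x]" n] assms by simp
  let ?R = "falling2 n ^ 2 / falling4 n" and ?Q = "mono_prob s n c"
  have "avg (colorings s n c) (\<lambda>f. edge_mono s {u,v} f * edge_mono s {w,x} f)
      = (\<Sum>i<s. \<Sum>j<s. avg (colorings s n c) (\<lambda>f. edge_colored i {u,v} f * edge_colored j {w,x} f))"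
    unfolding edge_mono_def sum_product by (simp add: avg_sum)
  also have "\<dots> \<le> (\<Sum>i<s. \<Sum>j<s. class_prob n c i * class_prob n c j * ?R)"
    using avg_edge_colored_disjoint_le[OF assms] by (intro sum_mono) auto
  also have "\<dots> = ?Q^2 * ?R"
    unfolding mono_prob_def power2_eq_square sum_product by (simp only: sum_distrib_right)
  finally have "cov (colorings s n c) (edge_mono s {u,v}) (edge_mono s {w,x}) \<le> ?Q^2 * ?R - ?Q * ?Q"
    unfolding cov_def using avg_edge_mono assms by simp
  also have "\<dots> = ?Q^2 * disjoint_cov_bound n"
    unfolding disjoint_cov_bound_def by (simp add: algebra_simps power2_eq_square)
  also have "\<dots> \<le> disjoint_cov_bound n"
    using mono_prob_nonneg mono_prob_le_one disjoint_cov_bound_nonneg[OF n4]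
    by (simp add: mult_left_le_one_le power_le_one)
  finally show ?thesis .
qed

lemma cov_edge_mono_adjacent_le:
  assumes "distinct [a,b,d]" "a < n" "b < n" "d < n"
  shows "cov (colorings s n c) (edge_mono s {a,b}) (edge_mono s {a,d}) \<le> adjacent_cov_bound s n c"
proof -
  have n3: "3 \<le> n"
    using length_le_if_distinct_below[of "[a,b,d]" n] assms by simp
  have "edge_mono s {a,b} f * edge_mono s {a,d} f = (\<Sum>i<s. ind (f a = i \<and> f b = i \<and> f d = i))"
    if f: "f \<in> colorings s n c" for f
  proof -
    have "edge_mono s {a,b} f * edge_mono s {a,d} f = ind (f a = f b \<and> f a = f d)"
      using edge_mono_pair[OF f assms(2)] by (simp add: ind_conj)
    also have "\<dots> = (\<Sum>i<s. if i = f a then ind (f a = f b \<and> f a = f d) else 0)"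
      using coloring_lt[OF f assms(2)] by simp
    also have "\<dots> = (\<Sum>i<s. ind (f a = i \<and> f b = i \<and> f d = i))"
      by (intro sum.cong refl) (auto simp: ind_def)
    finally show ?thesis .
  qed
  then have "avg (colorings s n c) (\<lambda>f. edge_mono s {a,b} f * edge_mono s {a,d} f)
      = avg (colorings s n c) (\<lambda>f. \<Sum>i<s. ind (f a = i \<and> f b = i \<and> f d = i))"
    by (rule avg_cong)
  also have "\<dots> = (\<Sum>i<s. real (card {f \<in> colorings s n c. f a = i \<and> f b = i \<and> f d = i})
      / real (card (colorings s n c)))"
    by (simp add: avg_sum avg_ind)
  also have "\<dots> \<le> (\<Sum>i<s. real (c i) ^ 3 / falling3 n)"
    using card_colorings_triple_le[OF comp assms] card_colorings_pos[OF comp] falling3_pos[OF n3]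
    by (intro sum_mono) (simp add: falling3_def field_simps)
  finally show ?thesis
    unfolding cov_def adjacent_cov_bound_def using avg_edge_mono assms
    by (simp add: sum_divide_distrib power2_eq_square)
qed

lemma sum_avg_edge_colored:
  assumes "simple_graph n E" "i < s"
  shows "(\<Sum>e\<in>E. avg (colorings s n c) (edge_colored i e)) = real (card E) * class_prob n c i"
proof -
  have "avg (colorings s n c) (edge_colored i e) = class_prob n c i" if "e \<in> E" for e
    using simple_graph_edge[OF assms(1) that] avg_edge_colored assms(2) by auto
  then show ?thesis by simp
qed

lemma sum_avg_edge_mono:
  assumes "simple_graph n E"
  shows "(\<Sum>e\<in>E. avg (colorings s n c) (edge_mono s e)) = real (card E) * mono_prob s n c"
proof -
  have "avg (colorings s n c) (edge_mono s e) = mono_prob s n c" if "e \<in> E" for e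
    using simple_graph_edge[OF assms(1) that] avg_edge_mono by auto
  then show ?thesis by simp
qed

lemma avg_Mi:
  assumes "simple_graph n E" "i < s"
  shows "avg (colorings s n c) (Mi E i) = real (card E) * class_prob n c i"
proof -
  have "Mi E i = (\<lambda>f. \<Sum>e\<in>E. edge_colored i e f)"
    using Mi_eq_sum_edge_colored[OF assms(1)] by auto
  then show ?thesis
    using sum_avg_edge_colored[OF assms] simple_graph_finite[OF assms(1)] by (simp add: avg_sum)
qed

lemma avg_Mtot:
  assumes "simple_graph n E"
  shows "avg (colorings s n c) (Mtot s E) = real (card E) * mono_prob s n c"
proof -
  have "Mtot s E = (\<lambda>f. \<Sum>e\<in>E. edge_mono s e f)"
    using Mtot_eq_sum_edge_mono[OF assms] by auto
  then show ?thesis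
    using sum_avg_edge_mono[OF assms] simple_graph_finite[OF assms] by (simp add: avg_sum)
qed

lemma avg_Ltot:
  assumes "simple_graph n E"
  shows "avg (colorings s n c) (Ltot s E) = real (card E) - real (card E) * mono_prob s n c"
  using avg_Mtot[OF assms] card_colorings_pos[OF comp]
  by (simp add: avg_def Ltot_def sum_subtractf diff_divide_distrib)

lemma sum_sq_dev_Mi_le:
  assumes sg: "simple_graph n E" and i: "i < s" and n4: "4 \<le> n"
  shows "(\<Sum>f\<in>colorings s n c. (Mi E i f - real (card E) * class_prob n c i)^2)
    \<le> real (card (colorings s n c))
      * (real (card E) + Sigma2 n E + disjoint_cov_bound n * real (card E)^2)"
proof -
  have "(\<Sum>f\<in>colorings s n c. ((\<Sum>e\<in>E. edge_colored i e f)
        - (\<Sum>e\<in>E. avg (colorings s n c) (edge_colored i e)))^2)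
      \<le> real (card (colorings s n c))
        * (real (card E) + 1 * Sigma2 n E + disjoint_cov_bound n * real (card E)^2)"
  proof (rule sum_sq_dev_edge_sum_le[OF colorings_finite colorings_nonempty[OF comp] sg])
    show "cov (colorings s n c) (edge_colored i e) (edge_colored i e') \<le> 1" for e e'
      by (intro cov_le_one[OF colorings_finite colorings_nonempty[OF comp]])
        (simp_all add: edge_colored_bounds)
    show "cov (colorings s n c) (edge_colored i e) (edge_colored i e') \<le> disjoint_cov_bound n"
      if "e \<in> E" "e' \<in> E" "e \<noteq> e'" "e \<inter> e' = {}" for e e'
      using disjoint_edges_shape[OF sg that(1,2,4)] cov_edge_colored_disjoint_le i by metis
  qed (simp_all add: edge_colored_bounds disjoint_cov_bound_nonneg[OF n4])
  then show ?thesis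
    using sum_avg_edge_colored[OF sg i] by (simp add: Mi_eq_sum_edge_colored[OF sg])
qed

lemma sum_sq_dev_Mtot_le:
  assumes sg: "simple_graph n E" and n4: "4 \<le> n"
    and g: "0 \<le> g" "1 \<le> g \<or> adjacent_cov_bound s n c \<le> g"
  shows "(\<Sum>f\<in>colorings s n c. (Mtot s E f - real (card E) * mono_prob s n c)^2)
    \<le> real (card (colorings s n c))
      * (real (card E) + g * Sigma2 n E + disjoint_cov_bound n * real (card E)^2)"
proof -
  have "(\<Sum>f\<in>colorings s n c. ((\<Sum>e\<in>E. edge_mono s e f)
        - (\<Sum>e\<in>E. avg (colorings s n c) (edge_mono s e)))^2)
      \<le> real (card (colorings s n c))
        * (real (card E) + g * Sigma2 n E + disjoint_cov_bound n * real (card E)^2)"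
  proof (rule sum_sq_dev_edge_sum_le[OF colorings_finite colorings_nonempty[OF comp] sg])
    show "0 \<le> edge_mono s e f \<and> edge_mono s e f \<le> 1" if "e \<in> E" "f \<in> colorings s n c" for e f
      using edge_mono_bounds[OF sg that] .
    show "cov (colorings s n c) (edge_mono s e) (edge_mono s e') \<le> g"
      if e: "e \<in> E" "e' \<in> E" "e \<noteq> e'" "e \<inter> e' \<noteq> {}" for e e'
    proof -
      have "cov (colorings s n c) (edge_mono s e) (edge_mono s e') \<le> 1"
        using e edge_mono_bounds[OF sg]
        by (intro cov_le_one[OF colorings_finite colorings_nonempty[OF comp]]) auto
      moreover have "cov (colorings s n c) (edge_mono s e) (edge_mono s e') \<le> adjacent_cov_bound s n c"
        using adjacent_edges_shape[OF sg e] cov_edge_mono_adjacent_le by metis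
      ultimately show ?thesis using g(2) by linarith
    qed
    show "cov (colorings s n c) (edge_mono s e) (edge_mono s e') \<le> disjoint_cov_bound n"
      if "e \<in> E" "e' \<in> E" "e \<noteq> e'" "e \<inter> e' = {}" for e e'
      using disjoint_edges_shape[OF sg that(1,2,4)] cov_edge_mono_disjoint_le by metis
  qed (use g disjoint_cov_bound_nonneg[OF n4] in auto)
  then show ?thesis
    using sum_avg_edge_mono[OF sg] by (simp add: Mtot_eq_sum_edge_mono[OF sg])
qed

lemma part_ratio_le_one: "i < s \<Longrightarrow> real (c i) / real n \<le> 1"
  using part_le[of i] by (cases "n = 0") auto

lemma part_le_complement:
  assumes "2 \<le> s" "i < s" "\<forall>k<s. \<beta> * real n \<le> real (c k)"
  shows "real (c i) \<le> real n - \<beta> * real n"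
proof -
  define k where "k = (if i = 0 then 1 else 0::nat)"
  have k: "k < s" "k \<noteq> i" using assms(1) by (auto simp: k_def)
  have "real (c i) + real (c k) = (\<Sum>j\<in>{i,k}. real (c j))" using k by simp
  also have "\<dots> \<le> (\<Sum>j<s. real (c j))" using assms(2) k by (intro sum_mono2) auto
  finally show ?thesis using sum_parts assms(3) k by force
qed

lemma mono_prob_le:
  assumes "2 \<le> s" "2 \<le> n" "0 < \<beta>" "\<forall>k<s. \<beta> * real n \<le> real (c k)"
  shows "mono_prob s n c \<le> 1 - \<beta>"
proof -
  have "(\<Sum>i<s. real (c i) ^ 2 - real (c i)) \<le> (\<Sum>i<s. real (c i) * (real n - \<beta> * real n - 1))"
  proof (intro sum_mono)
    fix i assume "i \<in> {..<s}"
    then have "real (c i) * (real (c i) - 1) \<le> real (c i) * (real n - \<beta> * real n - 1)"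
      using part_le_complement[OF assms(1) _ assms(4)] by (intro mult_left_mono) auto
    then show "real (c i) ^ 2 - real (c i) \<le> real (c i) * (real n - \<beta> * real n - 1)"
      by (simp add: power2_eq_square algebra_simps)
  qed
  also have "\<dots> = real n * (real n - \<beta> * real n - 1)"
    using sum_parts by (simp add: sum_distrib_right[symmetric])
  finally have "mono_prob s n c \<le> real n * (real n - \<beta> * real n - 1) / falling2 n"
    using falling2_pos[OF assms(2)] unfolding mono_prob_def class_prob_def
    by (simp add: sum_divide_distrib[symmetric] divide_right_mono)
  also have "\<dots> = 1 - \<beta> * real n / (real n - 1)"
    using assms(2) unfolding falling2_def by (simp add: field_simps)
  also have "\<dots> \<le> 1 - \<beta>"
    using assms(2,3) by (simp add: field_simps)
  finally show ?thesis .
qed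

lemma mono_prob_ge:
  assumes "2 \<le> n"
  shows "(\<Sum>i<s. (real (c i) / real n)^2) - 1 / real n \<le> mono_prob s n c"
proof -
  define S2 where "S2 = (\<Sum>i<s. (real (c i) / real n)^2)"
  have n: "0 < real n" "0 < real n - 1" using assms by auto
  have sq: "(\<Sum>i<s. real (c i) ^ 2) = real n ^ 2 * S2"
    unfolding S2_def using n by (simp add: sum_distrib_left power_divide)
  have "real n \<le> (\<Sum>i<s. real (c i) ^ 2)"
    unfolding sum_parts[symmetric]
  proof (intro sum_mono)
    show "real (c i) \<le> real (c i) ^ 2" for i
      by (cases "c i") (simp_all add: power2_eq_square)
  qed
  then have "real n * 1 \<le> real n * (real n * S2)"
    unfolding sq by (simp add: power2_eq_square mult.assoc)
  then have nS2: "1 \<le> real n * S2"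
    using n by (simp only: mult_le_cancel_left_pos)
  have "mono_prob s n c = ((\<Sum>i<s. real (c i) ^ 2) - real n) / falling2 n"
    unfolding mono_prob_def class_prob_def
    by (simp add: sum_divide_distrib[symmetric] sum_subtractf sum_parts)
  also have "\<dots> = (real n * S2 - 1) / (real n - 1)"
    unfolding sq falling2_def using n by (simp add: field_simps power2_eq_square)
  also have "\<dots> \<ge> (real n * S2 - 1) / real n"
    using nS2 n by (intro divide_left_mono) auto
  finally have "S2 - 1 / real n \<le> mono_prob s n c"
    using n by (simp add: diff_divide_distrib)
  then show ?thesis unfolding S2_def .
qed

lemma mono_prob_sq_ge:
  assumes "2 \<le> n"
  shows "(\<Sum>i<s. (real (c i) / real n)^2)^2 - 2 / real n \<le> mono_prob s n c ^ 2"
proof -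
  define S2 where "S2 = (\<Sum>i<s. (real (c i) / real n)^2)"
  have n: "0 < real n" using assms by simp
  have "S2 \<le> (\<Sum>i<s. real (c i) / real n)"
    unfolding S2_def using part_ratio_le_one
    by (intro sum_mono power_decreasing[of 1 2, simplified]) auto
  also have "\<dots> = 1" using sum_parts n by (simp add: sum_divide_distrib[symmetric])
  finally have S2: "0 \<le> S2" "S2 \<le> 1" unfolding S2_def by (auto intro: sum_nonneg)
  have twice: "1 / real n \<le> 2 / real n" "2 * S2 / real n \<le> 2 / real n"
    using S2 n by (simp_all add: divide_right_mono)
  have "S2^2 - 2 / real n \<le> mono_prob s n c ^ 2"
  proof (cases "S2 - 1 / real n \<ge> 0")
    case True
    have "S2^2 - 2 / real n \<le> (S2 - 1 / real n)^2"
      by (simp add: power2_diff) (use zero_le_power2[of "1 / real n"] twice(2) in linarith)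
    also have "\<dots> \<le> mono_prob s n c ^ 2"
      using True mono_prob_ge[OF assms] unfolding S2_def[symmetric] by (intro power_mono) auto
    finally show ?thesis .
  next
    case False
    have "S2^2 \<le> S2" using S2 by (simp add: power2_eq_square mult_left_le_one_le)
    then show ?thesis using False twice(1) zero_le_power2[of "mono_prob s n c"] by linarith
  qed
  then show ?thesis unfolding S2_def .
qed

lemma sum_cubes_div_falling3_le:
  assumes "3 \<le> n"
  shows "(\<Sum>i<s. real (c i) ^ 3) / falling3 n
    \<le> (\<Sum>i<s. (real (c i) / real n)^3) + (real n ^ 3 / falling3 n - 1)"
proof -
  define S3 where "S3 = (\<Sum>i<s. (real (c i) / real n)^3)"
  define x where "x = real n ^ 3 / falling3 n"
  have n: "0 < real n" using assms by simp
  have "falling3 n \<le> real n ^ 3"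
    using assms unfolding falling3_def power3_eq_cube
    by (intro mult_mono) (auto simp: mult_le_cancel_left1)
  then have x: "1 \<le> x" unfolding x_def using falling3_pos[OF assms] by simp
  have "S3 \<le> (\<Sum>i<s. real (c i) / real n)"
    unfolding S3_def using part_ratio_le_one
    by (intro sum_mono power_decreasing[of 1 3, simplified]) auto
  also have "\<dots> = 1" using sum_parts n by (simp add: sum_divide_distrib[symmetric])
  finally have "S3 * (x - 1) \<le> 1 * (x - 1)" using x by (intro mult_right_mono) auto
  moreover have "(\<Sum>i<s. real (c i) ^ 3) = S3 * real n ^ 3"
    unfolding S3_def using n by (simp add: sum_distrib_right power_divide)
  ultimately have "(\<Sum>i<s. real (c i) ^ 3) / falling3 n \<le> S3 + (x - 1)"
    unfolding x_def by (simp add: algebra_simps)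
  then show ?thesis unfolding S3_def x_def .
qed

lemma adjacent_cov_bound_le:
  assumes "3 \<le> n"
  shows "adjacent_cov_bound s n c
    \<le> (\<Sum>i<s. (real (c i) / real n - 1 / real s)^2) + (real n ^ 3 / falling3 n - 1) + 2 / real n"
proof -
  have "(\<Sum>i<s. (real (c i) / real n)^3) - (\<Sum>i<s. (real (c i) / real n)^2)^2
      \<le> (\<Sum>i<s. (real (c i) / real n - 1 / real s)^2)"
    using sum_parts part_ratio_le_one assms
    by (intro sum_cubes_sub_sq_sum_sq_le) (simp_all add: sum_divide_distrib[symmetric])
  then show ?thesis
    using sum_cubes_div_falling3_le[OF assms] mono_prob_sq_ge assms
    unfolding adjacent_cov_bound_def by fastforce
qed

end

section \<open>Neighbour counts and recolouring\<close>

definition nbr_colored :: "nat \<Rightarrow> nat \<Rightarrow> nat set \<Rightarrow> (nat \<Rightarrow> nat) \<Rightarrow> real" where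
  "nbr_colored h j e f = ind (h \<in> e) * ind (\<forall>v\<in>e. v \<noteq> h \<longrightarrow> f v = j)"

definition nbr_count :: "nat set set \<Rightarrow> nat \<Rightarrow> nat \<Rightarrow> (nat \<Rightarrow> nat) \<Rightarrow> real" where
  "nbr_count E h j f = (\<Sum>e\<in>E. nbr_colored h j e f)"

lemma nbr_colored_at: "a \<noteq> h \<Longrightarrow> nbr_colored h j {h,a} = (\<lambda>f. ind (f a = j))"
  by (auto simp: nbr_colored_def)

lemma nbr_colored_not_at: "h \<notin> e \<Longrightarrow> nbr_colored h j e = (\<lambda>f. 0)"
  by (auto simp: nbr_colored_def)

lemma nbr_colored_bounds: "0 \<le> nbr_colored h j e f \<and> nbr_colored h j e f \<le> 1"
  by (auto simp: nbr_colored_def ind_def)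

context
  fixes s n :: nat and c :: "nat \<Rightarrow> nat"
  assumes comp: "composition s n c"
begin

lemma avg_nbr_colored:
  assumes sg: "simple_graph n E" and e: "e \<in> E" and j: "j < s"
  shows "avg (colorings s n c) (nbr_colored h j e) = ind (h \<in> e) * real (c j) / real n"
proof (cases "h \<in> e")
  case True
  then obtain a where a: "e = {h,a}" "a \<noteq> h" "a < n"
    using simple_graph_edge_at[OF sg e] by blast
  then have "avg (colorings s n c) (nbr_colored h j e)
      = real (card {f \<in> colorings s n c. f a = j}) / real (card (colorings s n c))"
    by (simp add: nbr_colored_at avg_ind)
  also have "\<dots> = real (c j) / real n"
    using card_colorings_vertex[OF comp a(3) j] card_colorings_pos[OF comp] a(3)
    by (simp add: field_simps)
  finally show ?thesis using True by simp
qed (simp add: nbr_colored_not_at avg_def)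

lemma sum_avg_nbr_colored:
  assumes "simple_graph n E" "j < s"
  shows "(\<Sum>e\<in>E. avg (colorings s n c) (nbr_colored h j e)) = real (degree E h) * real (c j) / real n"
  using avg_nbr_colored[OF assms(1) _ assms(2)] degree_eq_sum_ind[OF assms(1)]
  by (simp add: sum_distrib_right sum_divide_distrib)

lemma cov_nbr_colored_nonpos:
  assumes sg: "simple_graph n E" and e: "e \<in> E" "e' \<in> E" "e \<noteq> e'" and j: "j < s"
  shows "cov (colorings s n c) (nbr_colored h j e) (nbr_colored h j e') \<le> 0"
proof (cases "h \<in> e \<and> h \<in> e'")
  case True
  obtain a where a: "e = {h,a}" "a \<noteq> h" "a < n"
    using simple_graph_edge_at[OF sg e(1)] True by blast
  obtain b where b: "e' = {h,b}" "b \<noteq> h" "b < n"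
    using simple_graph_edge_at[OF sg e(2)] True by blast
  have "a \<noteq> b" using a b e(3) by auto
  then have n2: "2 \<le> n" using a(3) b(3) by linarith
  have "avg (colorings s n c) (\<lambda>f. nbr_colored h j e f * nbr_colored h j e' f)
      = real (card {f \<in> colorings s n c. f a = j \<and> f b = j}) / real (card (colorings s n c))"
    using a b by (simp add: nbr_colored_at ind_conj avg_ind)
  also have "\<dots> = (real (c j) * real (c j) - real (c j)) / (real n * (real n - 1))"
    using card_colorings_pair[OF comp a(3) b(3) \<open>a \<noteq> b\<close> j j] card_colorings_pos[OF comp] n2
    by (simp add: field_simps)
  also have "\<dots> \<le> real (c j) / real n * (real (c j) / real n)"
  proof -
    have "real (c j) * real (c j) \<le> real n * real (c j)"
      using part_le[OF comp j] by (intro mult_right_mono) auto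
    then show ?thesis using n2 by (simp add: field_simps)
  qed
  finally show ?thesis
    unfolding cov_def using avg_nbr_colored[OF sg _ j] e True by simp
next
  case False
  then have "(\<lambda>f. nbr_colored h j e f * nbr_colored h j e' f) = (\<lambda>f. 0)"
    by (auto simp: nbr_colored_def)
  then show ?thesis
    unfolding cov_def using False avg_nbr_colored[OF sg _ j] e by (auto simp: avg_def)
qed

lemma sum_sq_dev_nbr_count_le:
  assumes sg: "simple_graph n E" and j: "j < s"
  shows "(\<Sum>f\<in>colorings s n c. (nbr_count E h j f - real (degree E h) * real (c j) / real n)^2)
    \<le> real (card (colorings s n c)) * real (card E)"
proof -
  have "(\<Sum>f\<in>colorings s n c. ((\<Sum>e\<in>E. nbr_colored h j e f)
        - (\<Sum>e\<in>E. avg (colorings s n c) (nbr_colored h j e)))^2)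
      \<le> real (card (colorings s n c)) * (real (card E) + 0 * Sigma2 n E + 0 * real (card E)^2)"
    using cov_nbr_colored_nonpos[OF sg _ _ _ j]
    by (intro sum_sq_dev_edge_sum_le[OF colorings_finite colorings_nonempty[OF comp] sg])
      (simp_all add: nbr_colored_bounds)
  then show ?thesis
    using sum_avg_nbr_colored[OF sg j] by (simp add: nbr_count_def)
qed

lemma card_nbr_count_dev_le:
  assumes "simple_graph n E" "j < s" "0 < t"
  shows "real (card {f \<in> colorings s n c.
      t < \<bar>nbr_count E h j f - real (degree E h) * real (c j) / real n\<bar>})
    \<le> real (card (colorings s n c)) * real (card E) / t^2"
  using card_dev_gt_le_sum_sq_dev[OF colorings_finite assms(3)] sum_sq_dev_nbr_count_le[OF assms(1,2)]
    assms(3)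
  by (simp add: field_simps) (meson order_trans)

lemma Mtot_eq_sum_ind_const:
  assumes sg: "simple_graph n E" and f: "f \<in> colorings s n c"
  shows "Mtot s E f = (\<Sum>e\<in>E. ind (\<forall>x\<in>e. \<forall>y\<in>e. f x = f y))"
proof -
  have "edge_mono s e f = ind (\<forall>x\<in>e. \<forall>y\<in>e. f x = f y)" if e: "e \<in> E" for e
  proof -
    obtain a b where "e = {a,b}" "a < n" using simple_graph_edge[OF sg e] by blast
    then show ?thesis using edge_mono_pair[OF f] by (auto intro!: arg_cong[where f = ind])
  qed
  then show ?thesis by (simp add: Mtot_eq_sum_edge_mono[OF sg])
qed

lemma Mtot_transpose_gain:
  assumes sg: "simple_graph n E" and f: "f \<in> colorings s n c" and hw: "h < n" "w < n" "w \<noteq> h"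
    and fh: "f h = i" and fw: "f w = j" and ij: "i \<noteq> j"
  shows "nbr_count E h j f - nbr_count E h i f - 2 * real (degree E w)
    \<le> Mtot s E (f \<circ> Transposition.transpose h w) - Mtot s E f"
proof -
  let ?g = "f \<circ> Transposition.transpose h w"
  let ?const = "\<lambda>f e. ind (\<forall>x\<in>e. \<forall>y\<in>e. f x = f y)"
  \<comment> \<open>Only edges at h or w are affected; an edge {h, a} with a \<noteq> w becomes monochromatic
    iff f a = j, and was monochromatic iff f a = i.\<close>
  have edge: "nbr_colored h j e f - nbr_colored h i e f - 2 * ind (w \<in> e) \<le> ?const ?g e - ?const f e"
    if e: "e \<in> E" for e
  proof (cases "w \<in> e")
    case True
    then show ?thesis
      using nbr_colored_bounds[of h j e f] nbr_colored_bounds[of h i e f] by (simp add: ind_def)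
  next
    case w_notin: False
    show ?thesis
    proof (cases "h \<in> e")
      case True
      then obtain a where a: "e = {h,a}" "a \<noteq> h" "a < n"
        using simple_graph_edge_at[OF sg e] by blast
      have "?g a = f a" "?g h = j"
        using a w_notin fw by (auto simp: Transposition.transpose_def)
      then have "?const ?g e = ind (f a = j)" "?const f e = ind (f a = i)"
        using a fh by (auto intro!: arg_cong[where f = ind])
      then show ?thesis
        using a w_notin by (simp add: nbr_colored_at)
    next
      case False
      then have "\<forall>x\<in>e. ?g x = f x"
        using w_notin by (auto simp: Transposition.transpose_def)
      then show ?thesis
        using False w_notin by (simp add: nbr_colored_not_at)
    qed
  qed
  have "nbr_count E h j f - nbr_count E h i f - 2 * real (degree E w)
      = (\<Sum>e\<in>E. nbr_colored h j e f - nbr_colored h i e f - 2 * ind (w \<in> e))"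
    unfolding nbr_count_def degree_eq_sum_ind[OF sg] by (simp add: sum_subtractf sum_distrib_left)
  also have "\<dots> \<le> (\<Sum>e\<in>E. ?const ?g e - ?const f e)"
    using edge by (rule sum_mono)
  also have "\<dots> = Mtot s E ?g - Mtot s E f"
    using Mtot_eq_sum_ind_const[OF sg] f coloring_comp_transpose[OF f hw(1,2)]
    by (simp add: sum_subtractf)
  finally show ?thesis .
qed

lemma card_gap_coloring_le:
  assumes sg: "simple_graph n E" and hw: "h < n" "w < n" "w \<noteq> h"
    and dw: "real (degree E w) \<le> K" and ij: "i \<noteq> j"
  shows "card {f \<in> colorings s n c.
      2 * K < nbr_count E h j f - nbr_count E h i f \<and> f h = i \<and> f w = j}
    \<le> 2 * card {f \<in> colorings s n c. Mtot s E f \<noteq> \<mu>}"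
proof -
  let ?t = "Transposition.transpose h w"
  let ?G = "{f \<in> colorings s n c. 2 * K < nbr_count E h j f - nbr_count E h i f \<and> f h = i \<and> f w = j}"
    and ?bad = "\<lambda>P. {f \<in> colorings s n c. P f}"
  have "?G \<subseteq> ?bad (\<lambda>f. Mtot s E (f \<circ> ?t) \<noteq> \<mu>) \<union> ?bad (\<lambda>f. Mtot s E f \<noteq> \<mu>)"
  proof (rule subsetI)
    fix f assume "f \<in> ?G"
    then have f: "f \<in> colorings s n c" "2 * K < nbr_count E h j f - nbr_count E h i f"
      "f h = i" "f w = j"
      by auto
    have "nbr_count E h j f - nbr_count E h i f - 2 * real (degree E w)
        \<le> Mtot s E (f \<circ> ?t) - Mtot s E f"
      using Mtot_transpose_gain[OF sg f(1) hw f(3,4) ij] .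
    then have "Mtot s E (f \<circ> ?t) \<noteq> Mtot s E f" using f(2) dw by linarith
    then show "f \<in> ?bad (\<lambda>f. Mtot s E (f \<circ> ?t) \<noteq> \<mu>) \<union> ?bad (\<lambda>f. Mtot s E f \<noteq> \<mu>)"
      using f(1) by auto
  qed
  then have "card ?G \<le> card (?bad (\<lambda>f. Mtot s E (f \<circ> ?t) \<noteq> \<mu>) \<union> ?bad (\<lambda>f. Mtot s E f \<noteq> \<mu>))"
    by (intro card_mono) (simp_all add: colorings_finite)
  also have "\<dots> \<le> card (?bad (\<lambda>f. Mtot s E (f \<circ> ?t) \<noteq> \<mu>)) + card (?bad (\<lambda>f. Mtot s E f \<noteq> \<mu>))"
    by (rule card_Un_le)
  finally show ?thesis
    using card_colorings_comp_transpose[OF hw(1,2), where P = "\<lambda>g. Mtot s E g \<noteq> \<mu>"] by simp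
qed

lemma sum_ind_low_degree_ge:
  assumes sg: "simple_graph n E" and f: "f \<in> colorings s n c" and j: "j < s" and K: "0 < K"
  shows "real (c j) - (1 + 2 * real (card E) / K)
    \<le> (\<Sum>w | w < n \<and> w \<noteq> h \<and> real (degree E w) \<le> K. ind (f w = j))"
proof -
  define W where "W = {w. w < n \<and> w \<noteq> h \<and> real (degree E w) \<le> K}"
  have "ind (f w = j) \<le> ind (w \<in> W) * ind (f w = j) + ind (w = h) + real (degree E w) / K"
    if "w < n" for w
  proof (cases "w \<in> W")
    case False
    then have "w = h \<or> K < real (degree E w)" using that by (auto simp: W_def)
    moreover have "0 \<le> real (degree E w) / K" using K by simp
    moreover have "1 < real (degree E w) / K" if "K < real (degree E w)"
      using that K by simp
    ultimately have "1 \<le> ind (w = h) + real (degree E w) / K"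
      by (cases "w = h") auto
    then have "ind (f w = j) \<le> ind (w = h) + real (degree E w) / K"
      using ind_le_one[of "f w = j"] by linarith
    then show ?thesis using False by simp
  qed (use K in simp)
  then have "real (c j) \<le> (\<Sum>w<n. ind (w \<in> W) * ind (f w = j) + ind (w = h) + real (degree E w) / K)"
    using coloring_class_size[OF f j] by (metis (no_types, lifting) lessThan_iff sum_mono)
  also have "\<dots> = (\<Sum>w<n. ind (w \<in> W) * ind (f w = j)) + (\<Sum>w<n. ind (w = h)) + 2 * real (card E) / K"
    using sum_degree[OF sg] by (simp add: sum.distrib sum_divide_distrib[symmetric])
  also have "(\<Sum>w<n. ind (w \<in> W) * ind (f w = j)) = (\<Sum>w\<in>W. ind (f w = j))"
    by (rule sum.mono_neutral_cong_right) (auto simp: W_def ind_def)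
  also have "(\<Sum>w<n. ind (w = h)) \<le> 1"
    by (simp add: sum_ind_card card_le_Suc0_iff_eq)
  finally show ?thesis unfolding W_def by simp
qed

lemma sum_ind_gap_ge:
  assumes sg: "simple_graph n E" and h: "h < n" and i: "i < s" and j: "j < s" and t: "0 < t"
    and gap: "2 * K + 2 * t < real (degree E h) * (real (c j) - real (c i)) / real n"
  shows "real (card (colorings s n c)) * (real (c i) / real n - 2 * real (card E) / t^2)
    \<le> (\<Sum>f\<in>colorings s n c. ind (2 * K < nbr_count E h j f - nbr_count E h i f \<and> f h = i))"
proof -
  let ?N = "real (card (colorings s n c))"
  let ?dev = "\<lambda>k f. t < \<bar>nbr_count E h k f - real (degree E h) * real (c k) / real n\<bar>"
  have "ind (f h = i) \<le> ind (2 * K < nbr_count E h j f - nbr_count E h i f \<and> f h = i)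
      + ind (?dev j f) + ind (?dev i f)" for f
  proof -
    have "2 * K < nbr_count E h j f - nbr_count E h i f \<or> ?dev j f \<or> ?dev i f"
      using gap by (auto simp: diff_divide_distrib right_diff_distrib abs_if split: if_splits)
    then show ?thesis by (auto simp: ind_def)
  qed
  then have "(\<Sum>f\<in>colorings s n c. ind (f h = i))
      \<le> (\<Sum>f\<in>colorings s n c. ind (2 * K < nbr_count E h j f - nbr_count E h i f \<and> f h = i))
        + real (card {f \<in> colorings s n c. ?dev j f}) + real (card {f \<in> colorings s n c. ?dev i f})"
    using colorings_finite by (simp add: sum_mono sum.distrib[symmetric] sum_ind_card[symmetric])
  moreover have "(\<Sum>f\<in>colorings s n c. ind (f h = i)) = ?N * real (c i) / real n"
    using card_colorings_vertex[OF comp h i] h colorings_finite by (simp add: sum_ind_card field_simps)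
  moreover have "real (card {f \<in> colorings s n c. ?dev j f}) \<le> ?N * real (card E) / t^2"
    using card_nbr_count_dev_le[OF sg j t] .
  moreover have "real (card {f \<in> colorings s n c. ?dev i f}) \<le> ?N * real (card E) / t^2"
    using card_nbr_count_dev_le[OF sg i t] .
  moreover have "?N * (real (c i) / real n - 2 * real (card E) / t^2)
      = ?N * real (c i) / real n - 2 * (?N * real (card E) / t^2)"
    by (simp add: algebra_simps)
  ultimately show ?thesis
    by linarith
qed

text \<open>Double counting of pairs (f, w): a colouring f with the gap event and f h = i has about
  c j vertices w of low degree coloured j, and for each such pair M f or M (f \<circ> (h w)) differs
  from \<mu>; the swap is a bijection of the colourings, so each bad colouring is counted at most
  2n times.\<close>
lemma card_Mtot_ne_ge:
  assumes sg: "simple_graph n E" and h: "h < n" and i: "i < s" and j: "j < s" and ij: "i \<noteq> j"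
    and K: "0 < K" and t: "0 < t"
    and gap: "2 * K + 2 * t < real (degree E h) * (real (c j) - real (c i)) / real n"
    and cj: "1 + 2 * real (card E) / K \<le> real (c j)"
  shows "(real (c i) / real n - 2 * real (card E) / t^2) * (real (c j) - (1 + 2 * real (card E) / K))
      / (2 * real n)
    \<le> real (card {f \<in> colorings s n c. Mtot s E f \<noteq> \<mu>}) / real (card (colorings s n c))"
proof -
  let ?N = "real (card (colorings s n c))" and ?r = "1 + 2 * real (card E) / K"
    and ?D = "real (card {f \<in> colorings s n c. Mtot s E f \<noteq> \<mu>})"
    and ?B = "\<lambda>f. 2 * K < nbr_count E h j f - nbr_count E h i f \<and> f h = i"
  define W where "W = {w. w < n \<and> w \<noteq> h \<and> real (degree E w) \<le> K}"
  have W: "W \<subseteq> {..<n}" "finite W" by (auto simp: W_def)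
  have "?N * (real (c i) / real n - 2 * real (card E) / t^2) * (real (c j) - ?r)
      \<le> (\<Sum>f\<in>colorings s n c. ind (?B f)) * (real (c j) - ?r)"
    using sum_ind_gap_ge[OF sg h i j t gap] cj by (intro mult_right_mono) auto
  also have "\<dots> \<le> (\<Sum>f\<in>colorings s n c. ind (?B f) * (\<Sum>w\<in>W. ind (f w = j)))"
    unfolding sum_distrib_right
    using sum_ind_low_degree_ge[OF sg _ j K, of _ h] by (intro sum_mono mult_left_mono) (auto simp: W_def)
  also have "\<dots> = (\<Sum>w\<in>W. real (card {f \<in> colorings s n c. ?B f \<and> f w = j}))"
    using colorings_finite
    by (simp add: sum_ind_card[symmetric] sum_distrib_left ind_conj sum.swap[of _ W])
  also have "\<dots> \<le> (\<Sum>w\<in>W. 2 * ?D)"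
  proof (intro sum_mono)
    fix w assume "w \<in> W"
    then have "card {f \<in> colorings s n c. ?B f \<and> f w = j} \<le> 2 * card {f \<in> colorings s n c. Mtot s E f \<noteq> \<mu>}"
      using card_gap_coloring_le[OF sg h _ _ _ ij] by (auto simp: W_def conj_assoc)
    then show "real (card {f \<in> colorings s n c. ?B f \<and> f w = j}) \<le> 2 * ?D"
      using of_nat_mono by fastforce
  qed
  also have "\<dots> \<le> real n * (2 * ?D)"
    using card_mono[OF _ W(1)] by (simp add: mult_right_mono)
  finally have "?N * (real (c i) / real n - 2 * real (card E) / t^2) * (real (c j) - ?r)
      \<le> real n * (2 * ?D)" .
  then show ?thesis
    using card_colorings_pos[OF comp] h by (simp add: field_simps)
qed

end

section \<open>Concentration and anti-concentration\<close>

lemma expectation_coloring_pmf: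
  "composition s n c \<Longrightarrow> measure_pmf.expectation (coloring_pmf s n c) X = avg (colorings s n c) X"
  unfolding coloring_pmf_def avg_def
  by (rule integral_pmf_of_set[OF colorings_nonempty colorings_finite])

lemma prob_coloring_pmf:
  "composition s n c \<Longrightarrow> measure_pmf.prob (coloring_pmf s n c) {f. P f}
    = real (card {f \<in> colorings s n c. P f}) / real (card (colorings s n c))"
  unfolding coloring_pmf_def
  by (subst measure_pmf_of_set[OF colorings_nonempty colorings_finite]) (simp_all add: Collect_conj_eq Int_commute)

lemma prob_rel_dev_le:
  assumes comp: "composition s n c" and m: "0 < m" and \<alpha>: "0 < \<alpha>" "\<alpha> * m \<le> avg (colorings s n c) X"
    and e: "0 < e"
    and var: "(\<Sum>f\<in>colorings s n c. (X f - avg (colorings s n c) X)^2)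
      \<le> real (card (colorings s n c)) * (m^2 * T)"
  shows "measure_pmf.prob (coloring_pmf s n c)
      {f. e < \<bar>X f / measure_pmf.expectation (coloring_pmf s n c) X - 1\<bar>} \<le> T / (\<alpha>^2 * e^2)"
proof -
  let ?\<mu> = "avg (colorings s n c) X" and ?N = "real (card (colorings s n c))"
  have N: "0 < ?N" by (rule card_colorings_pos[OF comp])
  have "0 < \<alpha> * m" using m \<alpha> by simp
  then have \<mu>: "0 < \<alpha> * m" "0 < ?\<mu>" using \<alpha>(2) by linarith+
  have "\<bar>X f / ?\<mu> - 1\<bar> = \<bar>X f - ?\<mu>\<bar> / ?\<mu>" for f
  proof -
    have "X f / ?\<mu> - 1 = (X f - ?\<mu>) / ?\<mu>" using \<mu> by (simp add: field_simps)
    then show ?thesis using \<mu> by simp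
  qed
  then have set: "{f \<in> colorings s n c. e < \<bar>X f / ?\<mu> - 1\<bar>} = {f \<in> colorings s n c. e * ?\<mu> < \<bar>X f - ?\<mu>\<bar>}"
    using \<mu> by (simp add: less_divide_eq)
  have "real (card {f \<in> colorings s n c. e * ?\<mu> < \<bar>X f - ?\<mu>\<bar>}) * (e * ?\<mu>)^2 \<le> ?N * (m^2 * T)"
    using card_dev_gt_le_sum_sq_dev[where Sp = "colorings s n c" and t = "e * ?\<mu>" and X = X and m = ?\<mu>]
      colorings_finite var e \<mu> by simp
  moreover have "?N * (m^2 * T) \<le> ?N * ((e * ?\<mu>)^2 * (T / (\<alpha>^2 * e^2)))"
  proof -
    have "0 \<le> ?N * (m^2 * T)"
      using var by (smt (verit) sum_nonneg zero_le_power2)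
    then have "0 \<le> T" using N m by (simp add: zero_le_mult_iff)
    moreover have "(\<alpha> * m)^2 \<le> ?\<mu>^2" using \<alpha> \<mu> by (intro power_mono) auto
    ultimately have "(\<alpha> * m)^2 * T \<le> ?\<mu>^2 * T" by (rule mult_right_mono[rotated])
    then have "m^2 * T \<le> (e * ?\<mu>)^2 * (T / (\<alpha>^2 * e^2))"
      using \<alpha> e by (simp add: field_simps power_mult_distrib)
    then show ?thesis using N by (intro mult_left_mono) auto
  qed
  ultimately have "real (card {f \<in> colorings s n c. e * ?\<mu> < \<bar>X f - ?\<mu>\<bar>}) * (e * ?\<mu>)^2
      \<le> (?N * (T / (\<alpha>^2 * e^2))) * (e * ?\<mu>)^2"
    by (simp add: mult_ac)
  then have "real (card {f \<in> colorings s n c. e * ?\<mu> < \<bar>X f - ?\<mu>\<bar>}) \<le> ?N * (T / (\<alpha>^2 * e^2))"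
    by (rule mult_right_le_imp_le) (use e \<mu> in auto)
  then have "real (card {f \<in> colorings s n c. e * ?\<mu> < \<bar>X f - ?\<mu>\<bar>}) / ?N \<le> T / (\<alpha>^2 * e^2)"
    using N by (simp add: divide_le_eq mult.commute)
  then show ?thesis
    by (simp add: prob_coloring_pmf[OF comp] expectation_coloring_pmf[OF comp] set)
qed

lemma concentrates_coloring_pmf:
  fixes X :: "nat \<Rightarrow> (nat \<Rightarrow> nat) \<Rightarrow> real" and m T :: "nat \<Rightarrow> real"
  assumes ev: "\<forall>\<^sub>F n in sequentially. composition s n (c n) \<and> 0 < m n
      \<and> \<alpha> * m n \<le> avg (colorings s n (c n)) (X n)
      \<and> (\<Sum>f\<in>colorings s n (c n). (X n f - avg (colorings s n (c n)) (X n))^2)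
        \<le> real (card (colorings s n (c n))) * (m n ^ 2 * T n)"
    and \<alpha>: "0 < \<alpha>" and T: "T \<longlonglongrightarrow> 0"
  shows "concentrates (\<lambda>n. coloring_pmf s n (c n)) X"
  unfolding concentrates_def
proof (intro allI impI)
  fix e :: real assume e: "0 < e"
  show "(\<lambda>n. measure_pmf.prob (coloring_pmf s n (c n))
      {f. e < \<bar>X n f / measure_pmf.expectation (coloring_pmf s n (c n)) (X n) - 1\<bar>}) \<longlonglongrightarrow> 0"
  proof (rule tendsto_sandwich[of "\<lambda>_. 0" _ _ "\<lambda>n. T n / (\<alpha>^2 * e^2)"])
    show "\<forall>\<^sub>F n in sequentially. measure_pmf.prob (coloring_pmf s n (c n))
        {f. e < \<bar>X n f / measure_pmf.expectation (coloring_pmf s n (c n)) (X n) - 1\<bar>}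
      \<le> T n / (\<alpha>^2 * e^2)"
      using ev by eventually_elim (use prob_rel_dev_le \<alpha> e in blast)
    show "(\<lambda>n. T n / (\<alpha>^2 * e^2)) \<longlonglongrightarrow> 0"
      using tendsto_divide_zero[OF T] by simp
  qed simp_all
qed

lemma exists_parts_gap:
  assumes comp: "composition s n c" and "0 < s" "0 < n"
    and big: "\<eta>^2 < (\<Sum>k<s. (real (c k) / real n - 1 / real s)^2)"
  obtains i j where "i < s" "j < s" "\<eta> / sqrt (real s) \<le> (real (c j) - real (c i)) / real n"
proof -
  define p where "p k = real (c k) / real n" for k
  have fin: "finite (c ` {..<s})" "c ` {..<s} \<noteq> {}" using assms(2) by auto
  obtain i where i: "i < s" "c i = Min (c ` {..<s})" using Min_in[OF fin] by auto
  obtain j where j: "j < s" "c j = Max (c ` {..<s})" using Max_in[OF fin] by auto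
  have p_between: "p i \<le> p k \<and> p k \<le> p j" if "k < s" for k
    using i j that fin assms(3) unfolding p_def by (auto intro!: divide_right_mono)
  have "(\<Sum>k<s. p k) = 1"
    unfolding p_def using sum_parts[OF comp] assms(3) by (simp add: sum_divide_distrib[symmetric])
  then have "real s * p i \<le> 1" "1 \<le> real s * p j"
    using sum_mono[of "{..<s}" "\<lambda>_. p i" p] sum_mono[of "{..<s}" p "\<lambda>_. p j"] p_between by auto
  then have avg_between: "p i \<le> 1 / real s" "1 / real s \<le> p j"
    using assms(2) by (simp_all add: field_simps)
  define d where "d = p j - p i"
  have "(\<Sum>k<s. (real (c k) / real n - 1 / real s)^2) \<le> (\<Sum>k<s. d^2)"
  proof (intro sum_mono)
    fix k assume "k \<in> {..<s}"
    then have "p i \<le> p k" "p k \<le> p j" using p_between by auto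
    then have "\<bar>p k - 1 / real s\<bar> \<le> d"
      using avg_between unfolding abs_le_iff d_def by linarith
    then have "\<bar>p k - 1 / real s\<bar>^2 \<le> d^2"
      by (intro power_mono) auto
    then show "(real (c k) / real n - 1 / real s)^2 \<le> d^2"
      unfolding p_def by simp
  qed
  then have "\<eta>^2 < real s * d^2"
    using big by simp
  then have "(\<eta> / sqrt (real s))^2 < d^2"
    using assms(2) by (simp add: power_divide field_simps)
  then have "\<eta> / sqrt (real s) < d"
    by (rule power_less_imp_less_base) (use avg_between in \<open>simp add: d_def\<close>)
  then show thesis
    using that[OF i(1) j(1)] unfolding d_def p_def by (simp add: diff_divide_distrib)
qed

lemma prob_Mtot_ne_ge:
  fixes a \<beta> \<delta> :: real
  defines "\<theta> \<equiv> a^2 * \<delta> / 16"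
  assumes comp: "composition s n c" and sg: "simple_graph n E"
    and \<beta>: "0 < \<beta>" "\<forall>k<s. \<beta> * real n \<le> real (c k)"
    and a: "0 < a" "a \<le> zeta n E"
    and ij: "i < s" "j < s" and \<delta>: "0 < \<delta>" "\<delta> \<le> (real (c j) - real (c i)) / real n"
    and m: "1 \<le> real (card E)" "4 / (\<theta>^2 * \<beta>) \<le> real (card E)"
    and n: "2 * (1 + 2 / \<theta>) / \<beta> \<le> real n"
  shows "\<beta>^2 / 8 \<le> measure_pmf.prob (coloring_pmf s n c) {f. 0 < \<bar>Mtot s E f - \<mu>\<bar>}"
proof -
  let ?m = "real (card E)"
  \<comment> \<open>K bounds both the degree of the swap partner and the deviation of the neighbour
    counts of h; the choice of \<theta> makes the difference of their means,
    degree E h * (c j - c i) / n, at least 8 K.\<close>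
  define K where "K = \<theta> * ?m"
  have \<theta>: "0 < \<theta>" unfolding \<theta>_def using a \<delta> by simp
  have K: "0 < K" unfolding K_def using \<theta> m by simp
  have "0 < 2 * (1 + 2 / \<theta>) / \<beta>"
    using \<theta> \<beta>(1) by (intro divide_pos_pos mult_pos_pos add_pos_pos) auto
  then have n_pos: "0 < real n" using n by linarith
  have "i \<noteq> j" using \<delta> by auto
  obtain h where h: "h < n" "a^2 * ?m / 2 \<le> real (degree E h)"
    using max_degree_ge_zeta[OF sg _ _ _ a(2)] n_pos m a by force
  have "8 * K = (a^2 * ?m / 2) * \<delta>"
    unfolding K_def \<theta>_def by simp
  also have "\<dots> \<le> real (degree E h) * ((real (c j) - real (c i)) / real n)"
    using h(2) \<delta> a by (intro mult_mono) auto
  finally have gap: "2 * K + 2 * K < real (degree E h) * (real (c j) - real (c i)) / real n"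
    using K by simp
  have r: "1 + 2 * ?m / K = 1 + 2 / \<theta>"
    unfolding K_def using m \<theta> by simp
  have "2 * (1 + 2 / \<theta>) \<le> \<beta> * real n"
    using \<beta> n by (simp add: field_simps)
  then have cj: "2 * (1 + 2 / \<theta>) \<le> real (c j)"
    using \<beta>(2) ij(2) by force
  have F1: "\<beta> / 2 \<le> real (c i) / real n - 2 * ?m / K^2"
  proof -
    have "2 * ?m / K^2 = 2 / (\<theta>^2 * ?m)"
      unfolding K_def using m by (simp add: power2_eq_square)
    also have "\<dots> \<le> \<beta> / 2"
      using m \<theta> \<beta> by (simp add: field_simps)
    moreover have "\<beta> \<le> real (c i) / real n"
      using \<beta>(2) ij(1) n_pos by (simp add: field_simps)
    ultimately show ?thesis by linarith
  qed
  have F2: "\<beta> / 4 \<le> (real (c j) - (1 + 2 * ?m / K)) / (2 * real n)"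
  proof -
    have "\<beta> * real n \<le> real (c j)" using \<beta>(2) ij(2) by blast
    then show ?thesis
      using cj n_pos unfolding r by (simp add: field_simps)
  qed
  have "(\<beta> / 2) * (\<beta> / 4)
      \<le> (real (c i) / real n - 2 * ?m / K^2) * ((real (c j) - (1 + 2 * ?m / K)) / (2 * real n))"
    by (rule mult_mono[OF F1 F2]) (use F1 \<beta> in linarith)+
  also have "\<dots> \<le> real (card {f \<in> colorings s n c. Mtot s E f \<noteq> \<mu>}) / real (card (colorings s n c))"
    using card_Mtot_ne_ge[OF comp sg h(1) ij \<open>i \<noteq> j\<close> K K gap] cj r \<theta> by simp
  finally show ?thesis
    by (simp add: prob_coloring_pmf[OF comp] power2_eq_square)
qed

lemma disjoint_cov_bound_tendsto_0: "disjoint_cov_bound \<longlonglongrightarrow> 0"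
  unfolding disjoint_cov_bound_def falling2_def falling4_def by real_asymp

lemma falling3_ratio_tendsto_0: "(\<lambda>n. real n ^ 3 / falling3 n - 1) \<longlonglongrightarrow> 0"
  unfolding falling3_def by real_asymp

lemma eventually_real_ge: "\<forall>\<^sub>F n in sequentially. x \<le> real n"
  using filterlim_real_sequentially unfolding filterlim_at_top by blast

lemma variance_bound_rescale:
  fixes m :: real
  assumes "1 \<le> m"
  shows "m + g * S + r * m^2 = m^2 * (1 / m + g * S / m^2 + r)"
  using assms by (simp add: field_simps power2_eq_square)

lemma concentrates_Mi:
  fixes E :: "nat \<Rightarrow> nat set set" and c :: "nat \<Rightarrow> nat \<Rightarrow> nat"
  assumes graph: "\<forall>n. simple_graph n (E n)" and i: "i < s"
    and comp: "\<forall>\<^sub>F n in sequentially. composition s n (c n)"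
    and \<beta>: "0 < \<beta>" "\<forall>\<^sub>F n in sequentially. \<forall>k<s. \<beta> * real n \<le> real (c n k)"
    and m: "\<forall>\<^sub>F n in sequentially. 1 \<le> real (card (E n))"
    and T: "(\<lambda>n. 1 / real (card (E n)) + Sigma2 n (E n) / real (card (E n))^2
      + disjoint_cov_bound n) \<longlonglongrightarrow> 0"
  shows "concentrates (\<lambda>n. coloring_pmf s n (c n)) (\<lambda>n. Mi (E n) i)"
proof (rule concentrates_coloring_pmf[where \<alpha> = "\<beta>^2 / 2" and m = "\<lambda>n. real (card (E n))", OF _ _ T])
  show "\<forall>\<^sub>F n in sequentially. composition s n (c n) \<and> 0 < real (card (E n))
      \<and> \<beta>^2 / 2 * real (card (E n)) \<le> avg (colorings s n (c n)) (Mi (E n) i)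
      \<and> (\<Sum>f\<in>colorings s n (c n). (Mi (E n) i f - avg (colorings s n (c n)) (Mi (E n) i))^2)
        \<le> real (card (colorings s n (c n))) * (real (card (E n))^2 * (1 / real (card (E n))
          + Sigma2 n (E n) / real (card (E n))^2 + disjoint_cov_bound n))"
    using comp \<beta>(2) m eventually_ge_at_top[of 4] eventually_real_ge[of "2 / \<beta> + 1"]
  proof eventually_elim
    case (elim n)
    then have "\<beta>^2 / 2 \<le> class_prob n (c n) i"
      using i \<beta>(1) by (intro class_prob_ge) auto
    then have "\<beta>^2 / 2 * real (card (E n)) \<le> real (card (E n)) * class_prob n (c n) i"
      using elim by (simp add: mult.commute mult_left_mono)
    then show ?case
      using elim sum_sq_dev_Mi_le[OF elim(1) graph[rule_format] i elim(4)]
      by (simp add: avg_Mi[OF elim(1) graph[rule_format] i] variance_bound_rescale[of _ 1, simplified])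
  qed
qed (use \<beta> in simp)

lemma Ltot_Mtot_moment_bounds:
  assumes comp: "composition s n c" and sg: "simple_graph n E" and s: "2 \<le> s"
    and \<beta>: "0 < \<beta>" "\<forall>k<s. \<beta> * real n \<le> real (c k)" and n: "4 \<le> n" "2 / \<beta> + 1 \<le> real n"
    and g: "0 \<le> g" "1 \<le> g \<or> adjacent_cov_bound s n c \<le> g" and m: "1 \<le> real (card E)"
  shows "\<beta> * real (card E) \<le> avg (colorings s n c) (Ltot s E)"
    and "\<beta>^2 / 2 * real (card E) \<le> avg (colorings s n c) (Mtot s E)"
    and "(\<Sum>f\<in>colorings s n c. (Mtot s E f - avg (colorings s n c) (Mtot s E))^2)
      \<le> real (card (colorings s n c)) * (real (card E)^2
        * (1 / real (card E) + g * Sigma2 n E / real (card E)^2 + disjoint_cov_bound n))"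
proof -
  have "mono_prob s n c \<le> 1 - \<beta>"
    using n s \<beta> by (intro mono_prob_le[OF comp]) auto
  then have "real (card E) * mono_prob s n c \<le> real (card E) * (1 - \<beta>)"
    by (rule mult_left_mono) simp
  then show "\<beta> * real (card E) \<le> avg (colorings s n c) (Ltot s E)"
    using avg_Ltot[OF comp sg] by (simp add: algebra_simps)
  have "\<beta>^2 / 2 \<le> class_prob n c 0"
    using n s \<beta> by (intro class_prob_ge) auto
  also have "\<dots> \<le> mono_prob s n c"
    using s by (intro class_prob_le_mono_prob) auto
  finally have "real (card E) * (\<beta>^2 / 2) \<le> real (card E) * mono_prob s n c"
    by (rule mult_left_mono) simp
  then show "\<beta>^2 / 2 * real (card E) \<le> avg (colorings s n c) (Mtot s E)"
    using avg_Mtot[OF comp sg] by (simp add: mult.commute)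
  show "(\<Sum>f\<in>colorings s n c. (Mtot s E f - avg (colorings s n c) (Mtot s E))^2)
      \<le> real (card (colorings s n c)) * (real (card E)^2
        * (1 / real (card E) + g * Sigma2 n E / real (card E)^2 + disjoint_cov_bound n))"
    using sum_sq_dev_Mtot_le[OF comp sg n(1) g] m
    by (simp add: avg_Mtot[OF comp sg] variance_bound_rescale)
qed

lemma concentrates_Ltot_Mtot:
  fixes E :: "nat \<Rightarrow> nat set set" and c :: "nat \<Rightarrow> nat \<Rightarrow> nat" and g :: "nat \<Rightarrow> real"
  assumes s: "2 \<le> s" and graph: "\<forall>n. simple_graph n (E n)"
    and comp: "\<forall>\<^sub>F n in sequentially. composition s n (c n)"
    and \<beta>: "0 < \<beta>" "\<forall>\<^sub>F n in sequentially. \<forall>k<s. \<beta> * real n \<le> real (c n k)"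
    and m: "\<forall>\<^sub>F n in sequentially. 1 \<le> real (card (E n))"
    and g: "\<forall>\<^sub>F n in sequentially. 0 \<le> g n \<and> (1 \<le> g n \<or> adjacent_cov_bound s n (c n) \<le> g n)"
    and T: "(\<lambda>n. 1 / real (card (E n)) + g n * Sigma2 n (E n) / real (card (E n))^2
      + disjoint_cov_bound n) \<longlonglongrightarrow> 0"
  shows "concentrates (\<lambda>n. coloring_pmf s n (c n)) (\<lambda>n. Ltot s (E n))
    \<and> concentrates (\<lambda>n. coloring_pmf s n (c n)) (\<lambda>n. Mtot s (E n))"
proof -
  let ?m = "\<lambda>n. real (card (E n))"
  let ?T = "\<lambda>n. 1 / ?m n + g n * Sigma2 n (E n) / ?m n ^ 2 + disjoint_cov_bound n"
  let ?dev = "\<lambda>X n. (\<Sum>f\<in>colorings s n (c n). (X f - avg (colorings s n (c n)) X)^2)"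
  have sq_eq: "(Ltot s (E n) f - avg (colorings s n (c n)) (Ltot s (E n)))^2
      = (Mtot s (E n) f - avg (colorings s n (c n)) (Mtot s (E n)))^2"
    if "composition s n (c n)" for n f
    using avg_Ltot[OF that graph[rule_format]] avg_Mtot[OF that graph[rule_format]]
    by (simp add: Ltot_def power2_commute)
  have ev: "\<forall>\<^sub>F n in sequentially. composition s n (c n) \<and> 0 < ?m n
      \<and> \<beta> * ?m n \<le> avg (colorings s n (c n)) (Ltot s (E n))
      \<and> \<beta>^2 / 2 * ?m n \<le> avg (colorings s n (c n)) (Mtot s (E n))
      \<and> ?dev (Ltot s (E n)) n \<le> real (card (colorings s n (c n))) * (?m n ^ 2 * ?T n)
      \<and> ?dev (Mtot s (E n)) n \<le> real (card (colorings s n (c n))) * (?m n ^ 2 * ?T n)"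
    using comp \<beta>(2) m g eventually_ge_at_top[of 4] eventually_real_ge[of "2 / \<beta> + 1"]
  proof eventually_elim
    case (elim n)
    then show ?case
      using Ltot_Mtot_moment_bounds[OF elim(1) graph[rule_format] s \<beta>(1) elim(2,5,6)
          conjunct1[OF elim(4)] conjunct2[OF elim(4)] elim(3)]
      by (simp add: sq_eq)
  qed
  have "concentrates (\<lambda>n. coloring_pmf s n (c n)) (\<lambda>n. Ltot s (E n))"
    using ev \<beta>(1) by (intro concentrates_coloring_pmf[where m = ?m, OF _ _ T]) (auto elim: eventually_mono)
  moreover have "concentrates (\<lambda>n. coloring_pmf s n (c n)) (\<lambda>n. Mtot s (E n))"
    using ev \<beta>(1)
    by (intro concentrates_coloring_pmf[where m = ?m and \<alpha> = "\<beta>^2 / 2", OF _ _ T])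
      (auto elim: eventually_mono)
  ultimately show ?thesis ..
qed

lemma eventually_parts_ge:
  fixes c :: "nat \<Rightarrow> nat \<Rightarrow> nat"
  assumes "0 < liminf (\<lambda>n. ereal (real (Min (c n ` {..<s})) / real n))"
  obtains \<beta> where "0 < \<beta>" "\<forall>\<^sub>F n in sequentially. \<forall>i<s. \<beta> * real n \<le> real (c n i)"
proof -
  obtain \<beta> where \<beta>: "0 < ereal \<beta>" "ereal \<beta> < liminf (\<lambda>n. ereal (real (Min (c n ` {..<s})) / real n))"
    using ereal_dense2[OF assms] by blast
  have "\<forall>\<^sub>F n in sequentially. \<beta> < real (Min (c n ` {..<s})) / real n"
    using less_LiminfD[OF \<beta>(2)] by simp
  then have "\<forall>\<^sub>F n in sequentially. \<forall>i<s. \<beta> * real n \<le> real (c n i)"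
  proof (rule eventually_mono, intro allI impI)
    fix n i assume less: "\<beta> < real (Min (c n ` {..<s})) / real n" and "i < s"
    then have "0 < real n" using \<beta>(1) by (cases n) auto
    then have "\<beta> * real n < real (Min (c n ` {..<s}))" using less by (simp add: field_simps)
    moreover have "Min (c n ` {..<s}) \<le> c n i" using \<open>i < s\<close> by (intro Min_le) auto
    ultimately show "\<beta> * real n \<le> real (c n i)" by linarith
  qed
  then show thesis using that \<beta>(1) by simp
qed

lemma concentrates_if_zeta_tendsto_0:
  fixes E :: "nat \<Rightarrow> nat set set" and c :: "nat \<Rightarrow> nat \<Rightarrow> nat"
  assumes s: "2 \<le> s" and graph: "\<forall>n. simple_graph n (E n)"
    and comp: "\<forall>\<^sub>F n in sequentially. composition s n (c n)"
    and \<beta>: "0 < \<beta>" "\<forall>\<^sub>F n in sequentially. \<forall>k<s. \<beta> * real n \<le> real (c n k)"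
    and m: "filterlim (\<lambda>n. real (card (E n))) at_top sequentially"
    and zeta: "(\<lambda>n. zeta n (E n)) \<longlonglongrightarrow> 0"
  shows "(\<forall>i<s. concentrates (\<lambda>n. coloring_pmf s n (c n)) (\<lambda>n. Mi (E n) i))
    \<and> concentrates (\<lambda>n. coloring_pmf s n (c n)) (\<lambda>n. Ltot s (E n))
    \<and> concentrates (\<lambda>n. coloring_pmf s n (c n)) (\<lambda>n. Mtot s (E n))"
proof -
  have m1: "\<forall>\<^sub>F n in sequentially. 1 \<le> real (card (E n))"
    using m unfolding filterlim_at_top by blast
  have "(\<lambda>n. 1 / real (card (E n)) + zeta n (E n)^2 + disjoint_cov_bound n) \<longlonglongrightarrow> 0 + 0^2 + 0"
    using tendsto_inverse_0_at_top[OF m]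
    by (intro tendsto_intros zeta disjoint_cov_bound_tendsto_0) (simp add: inverse_eq_divide)
  moreover have "zeta n (E n)^2 = Sigma2 n (E n) / real (card (E n))^2" for n
    unfolding zeta_def using Sigma2_nonneg by (simp add: power_divide)
  ultimately have T: "(\<lambda>n. 1 / real (card (E n)) + Sigma2 n (E n) / real (card (E n))^2
      + disjoint_cov_bound n) \<longlonglongrightarrow> 0"
    by simp
  show ?thesis
    using concentrates_Mi[OF graph _ comp \<beta> m1 T]
      concentrates_Ltot_Mtot[OF s graph comp \<beta> m1 _, of "\<lambda>_. 1"] T
    by simp
qed

lemma tendsto_mult_Sigma2_ratio:
  fixes E :: "nat \<Rightarrow> nat set set"
  assumes graph: "\<forall>n. simple_graph n (E n)" and m: "\<forall>\<^sub>F n in sequentially. 1 \<le> real (card (E n))"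
    and g: "g \<longlonglongrightarrow> 0" "\<And>n. 0 \<le> g n"
  shows "(\<lambda>n. g n * Sigma2 n (E n) / real (card (E n))^2) \<longlonglongrightarrow> 0"
proof (rule tendsto_sandwich[of "\<lambda>_. 0" _ _ "\<lambda>n. 2 * g n"])
  show "\<forall>\<^sub>F n in sequentially. g n * Sigma2 n (E n) / real (card (E n))^2 \<le> 2 * g n"
    using m
  proof eventually_elim
    case (elim n)
    have "g n * Sigma2 n (E n) \<le> g n * (2 * real (card (E n))^2)"
      using Sigma2_le[OF graph[rule_format]] g(2) by (intro mult_left_mono) auto
    then show ?case using elim by (simp add: field_simps)
  qed
  show "(\<lambda>n. 2 * g n) \<longlonglongrightarrow> 0" using tendsto_mult_right_zero[OF g(1)] by simp
qed (use g(2) Sigma2_nonneg in simp_all)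

lemma concentrates_if_balanced:
  fixes E :: "nat \<Rightarrow> nat set set" and c :: "nat \<Rightarrow> nat \<Rightarrow> nat"
  assumes s: "2 \<le> s" and graph: "\<forall>n. simple_graph n (E n)"
    and comp: "\<forall>\<^sub>F n in sequentially. composition s n (c n)"
    and \<beta>: "0 < \<beta>" "\<forall>\<^sub>F n in sequentially. \<forall>k<s. \<beta> * real n \<le> real (c n k)"
    and m: "filterlim (\<lambda>n. real (card (E n))) at_top sequentially"
    and balanced: "(\<lambda>n. sqrt (\<Sum>i<s. (real (c n i) / real n - 1 / real s)^2)) \<longlonglongrightarrow> 0"
  shows "concentrates (\<lambda>n. coloring_pmf s n (c n)) (\<lambda>n. Ltot s (E n))
    \<and> concentrates (\<lambda>n. coloring_pmf s n (c n)) (\<lambda>n. Mtot s (E n))"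
proof -
  define d where "d n = (\<Sum>i<s. (real (c n i) / real n - 1 / real s)^2)" for n
  define g where "g n = d n + \<bar>real n ^ 3 / falling3 n - 1\<bar> + 2 / real n" for n
  have d0: "0 \<le> d n" for n unfolding d_def by (intro sum_nonneg) simp
  then have g0: "0 \<le> g n" for n unfolding g_def by simp
  have "(\<lambda>n. (sqrt (d n))^2) \<longlonglongrightarrow> 0^2"
    using balanced unfolding d_def by (intro tendsto_power)
  then have "d \<longlonglongrightarrow> 0" using d0 by simp
  then have "g \<longlonglongrightarrow> 0 + 0 + 0"
    unfolding g_def
    by (intro tendsto_add tendsto_rabs_zero falling3_ratio_tendsto_0 tendsto_divide_0[OF tendsto_const]
        filterlim_at_top_imp_at_infinity[OF filterlim_real_sequentially])
  then have g: "g \<longlonglongrightarrow> 0" by simp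
  have m1: "\<forall>\<^sub>F n in sequentially. 1 \<le> real (card (E n))"
    using m unfolding filterlim_at_top by blast
  have gc: "\<forall>\<^sub>F n in sequentially. 0 \<le> g n \<and> (1 \<le> g n \<or> adjacent_cov_bound s n (c n) \<le> g n)"
    using comp eventually_ge_at_top[of 3]
  proof eventually_elim
    case (elim n)
    then have "adjacent_cov_bound s n (c n) \<le> g n"
      using adjacent_cov_bound_le[OF elim] unfolding g_def d_def by simp
    then show ?case using g0 by simp
  qed
  have "(\<lambda>n. g n * Sigma2 n (E n) / real (card (E n))^2) \<longlonglongrightarrow> 0"
    by (rule tendsto_mult_Sigma2_ratio[OF graph m1 g g0])
  then have "(\<lambda>n. 1 / real (card (E n)) + g n * Sigma2 n (E n) / real (card (E n))^2
      + disjoint_cov_bound n) \<longlonglongrightarrow> 0 + 0 + 0"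
    using tendsto_inverse_0_at_top[OF m]
    by (intro tendsto_add disjoint_cov_bound_tendsto_0) (simp_all add: inverse_eq_divide)
  then show ?thesis
    using concentrates_Ltot_Mtot[OF s graph comp \<beta> m1 gc] by simp
qed

lemma eventually_prob_Mtot_ne_ge:
  fixes E :: "nat \<Rightarrow> nat set set" and c :: "nat \<Rightarrow> nat \<Rightarrow> nat"
  assumes s: "2 \<le> s" and graph: "\<forall>n. simple_graph n (E n)"
    and comp: "\<forall>\<^sub>F n in sequentially. composition s n (c n)"
    and \<beta>: "0 < \<beta>" "\<forall>\<^sub>F n in sequentially. \<forall>k<s. \<beta> * real n \<le> real (c n k)"
    and m: "filterlim (\<lambda>n. real (card (E n))) at_top sequentially"
    and a: "0 < a" "\<forall>\<^sub>F n in sequentially. a \<le> zeta n (E n)"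
    and unbalanced: "0 < liminf (\<lambda>n. ereal (sqrt (\<Sum>i<s. (real (c n i) / real n - 1 / real s)^2)))"
  shows "\<forall>\<^sub>F n in sequentially. \<forall>\<mu>.
    \<beta>^2 / 8 \<le> measure_pmf.prob (coloring_pmf s n (c n)) {f. 0 < \<bar>Mtot s (E n) f - \<mu>\<bar>}"
proof -
  obtain \<eta> where \<eta>: "0 < ereal \<eta>"
      "ereal \<eta> < liminf (\<lambda>n. ereal (sqrt (\<Sum>i<s. (real (c n i) / real n - 1 / real s)^2)))"
    using ereal_dense2[OF unbalanced] by blast
  define \<delta> where "\<delta> = \<eta> / sqrt (real s)"
  define \<theta> where "\<theta> = a^2 * \<delta> / 16"
  have \<delta>: "0 < \<delta>" and \<theta>: "0 < \<theta>"
    using \<eta>(1) s a(1) by (simp_all add: \<delta>_def \<theta>_def)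
  have "\<forall>\<^sub>F n in sequentially. \<eta> < sqrt (\<Sum>i<s. (real (c n i) / real n - 1 / real s)^2)"
    using less_LiminfD[OF \<eta>(2)] by simp
  moreover have "\<forall>\<^sub>F n in sequentially. max 1 (4 / (\<theta>^2 * \<beta>)) \<le> real (card (E n))"
    using m unfolding filterlim_at_top by blast
  ultimately show ?thesis
    using comp \<beta>(2) a(2) eventually_real_ge[of "2 * (1 + 2 / \<theta>) / \<beta>"]
  proof eventually_elim
    case (elim n)
    have "0 < 2 * (1 + 2 / \<theta>) / \<beta>"
      using \<theta> \<beta>(1) by (intro divide_pos_pos mult_pos_pos add_pos_pos) auto
    then have "0 < real n" using elim(6) by linarith
    have "\<eta>^2 < (sqrt (\<Sum>i<s. (real (c n i) / real n - 1 / real s)^2))^2"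
      using elim(1) \<eta>(1) by (intro power_strict_mono) auto
    then have "\<eta>^2 < (\<Sum>i<s. (real (c n i) / real n - 1 / real s)^2)"
      by (simp add: sum_nonneg)
    then obtain i j where "i < s" "j < s" "\<delta> \<le> (real (c n j) - real (c n i)) / real n"
      using exists_parts_gap[OF elim(3)] s \<open>0 < real n\<close> unfolding \<delta>_def by auto
    then show ?case
      using prob_Mtot_ne_ge[OF elim(3) graph[rule_format] \<beta>(1) elim(4) a(1) elim(5) _ _ \<delta>]
        elim(2,6) unfolding \<theta>_def by simp
  qed
qed

lemma anticoncentration_if_unbalanced:
  fixes E :: "nat \<Rightarrow> nat set set" and c :: "nat \<Rightarrow> nat \<Rightarrow> nat"
  assumes s: "2 \<le> s" and graph: "\<forall>n. simple_graph n (E n)"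
    and comp: "\<forall>\<^sub>F n in sequentially. composition s n (c n)"
    and \<beta>: "0 < \<beta>" "\<forall>\<^sub>F n in sequentially. \<forall>k<s. \<beta> * real n \<le> real (c n k)"
    and m: "filterlim (\<lambda>n. real (card (E n))) at_top sequentially"
    and a: "0 < a" "\<forall>\<^sub>F n in sequentially. a \<le> zeta n (E n)"
    and unbalanced: "0 < liminf (\<lambda>n. ereal (sqrt (\<Sum>i<s. (real (c n i) / real n - 1 / real s)^2)))"
  defines "P \<equiv> \<lambda>n. coloring_pmf s n (c n)"
  shows "0 < liminf (\<lambda>n. ereal (measure_pmf.prob (P n)
      {f. 0 < \<bar>Mtot s (E n) f - measure_pmf.expectation (P n) (Mtot s (E n))\<bar>}))
    \<and> 0 < liminf (\<lambda>n. ereal (measure_pmf.prob (P n)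
      {f. 0 < \<bar>Ltot s (E n) f - measure_pmf.expectation (P n) (Ltot s (E n))\<bar>}))"
proof -
  have ev: "\<forall>\<^sub>F n in sequentially. \<forall>\<mu>. ereal (\<beta>^2 / 8)
      \<le> ereal (measure_pmf.prob (P n) {f. 0 < \<bar>Mtot s (E n) f - \<mu>\<bar>})"
    using eventually_prob_Mtot_ne_ge[OF assms(1-9)] unfolding P_def by simp
  have "\<bar>Ltot s (E n) f - \<nu>\<bar> = \<bar>Mtot s (E n) f - (real (card (E n)) - \<nu>)\<bar>" for n f \<nu>
    unfolding Ltot_def by linarith
  then have "ereal (\<beta>^2 / 8) \<le> liminf (\<lambda>n. ereal (measure_pmf.prob (P n)
        {f. 0 < \<bar>Mtot s (E n) f - measure_pmf.expectation (P n) (Mtot s (E n))\<bar>}))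
    \<and> ereal (\<beta>^2 / 8) \<le> liminf (\<lambda>n. ereal (measure_pmf.prob (P n)
        {f. 0 < \<bar>Ltot s (E n) f - measure_pmf.expectation (P n) (Ltot s (E n))\<bar>}))"
    using ev by (auto intro!: Liminf_bounded elim!: eventually_mono)
  moreover have "0 < ereal (\<beta>^2 / 8)" using \<beta>(1) by simp
  ultimately show ?thesis by (blast intro: order.strict_trans2)
qed

theorem theorem1p1:
  fixes s :: nat and E :: "nat \<Rightarrow> nat set set" and c :: "nat \<Rightarrow> nat \<Rightarrow> nat"
  assumes s2: "s \<ge> 2"
    and graph: "\<forall>n. simple_graph n (E n)"
    and comp: "\<forall>\<^sub>F n in sequentially. composition s n (c n)"
    and cmin: "liminf (\<lambda>n. ereal (real (Min (c n ` {..<s})) / real n)) > 0"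
    and medges: "filterlim (\<lambda>n. real (card (E n))) at_top sequentially"
  defines "P \<equiv> (\<lambda>n. coloring_pmf s n (c n))"
  shows
    "((\<lambda>n. zeta n (E n)) \<longlonglongrightarrow> 0 \<longrightarrow>
        (\<forall>i<s. concentrates P (\<lambda>n. Mi (E n) i))
        \<and> concentrates P (\<lambda>n. Ltot s (E n)) \<and> concentrates P (\<lambda>n. Mtot s (E n)))
     \<and> ((\<exists>a b. 0 < a \<and> 0 < b \<and> (\<forall>\<^sub>F n in sequentially. a \<le> zeta n (E n) \<and> zeta n (E n) \<le> b))
         \<and> liminf (\<lambda>n. ereal (sqrt (\<Sum>i<s. (real (c n i) / real n - 1 / real s) ^ 2))) > 0
        \<longrightarrow> liminf (\<lambda>n. ereal (measure_pmf.prob (P n)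
                {f. \<bar>Mtot s (E n) f - measure_pmf.expectation (P n) (Mtot s (E n))\<bar> > 0})) > 0
          \<and> liminf (\<lambda>n. ereal (measure_pmf.prob (P n)
                {f. \<bar>Ltot s (E n) f - measure_pmf.expectation (P n) (Ltot s (E n))\<bar> > 0})) > 0)
     \<and> ((\<lambda>n. sqrt (\<Sum>i<s. (real (c n i) / real n - 1 / real s) ^ 2)) \<longlonglongrightarrow> 0 \<longrightarrow>
        concentrates P (\<lambda>n. Ltot s (E n)) \<and> concentrates P (\<lambda>n. Mtot s (E n)))"
proof -
  obtain \<beta> where \<beta>: "0 < \<beta>" "\<forall>\<^sub>F n in sequentially. \<forall>i<s. \<beta> * real n \<le> real (c n i)"
    using eventually_parts_ge[OF cmin] by blast
  have "\<exists>a. 0 < a \<and> (\<forall>\<^sub>F n in sequentially. a \<le> zeta n (E n))"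
    if "\<exists>a b. 0 < a \<and> 0 < b \<and> (\<forall>\<^sub>F n in sequentially. a \<le> zeta n (E n) \<and> zeta n (E n) \<le> b)"
    using that by (auto elim: eventually_mono)
  then show ?thesis
    using concentrates_if_zeta_tendsto_0[OF s2 graph comp \<beta> medges]
      anticoncentration_if_unbalanced[OF s2 graph comp \<beta> medges]
      concentrates_if_balanced[OF s2 graph comp \<beta> medges]
    unfolding P_def by blast
qed

end
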